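(* Assume $B\subseteq A\subsetneq[m]$ and let $\rho=0$ if $B=A$, $\rho=1$ if $B\subsetneq A$. (a) If $q\ge3$, or $q=2$ and $|[m]\setminus A|\ge2$, then $\mathcal C_{\overline{\mathcal N}_2}$ is a $q$-ary $\left[\frac{2q^{|B|+|C|}(q^m-q^{|A|})}{q-1},\ 2m+|C|,\ (q^m-\rho q^{|A|})q^{|B|+|C|-1}\right]$ locally repairable code with locality $2$. (b) If $q=2$ and $|[m]\setminus A|=1$, then $\mathcal C_{\overline{\mathcal N}_2}$ is a binary $\left[2^{m+|B|+|C|},\ 2m+|C|,\ (2-\rho)2^{m+|B|+|C|-2}\right]$ locally repairable code with locality $3$.
   Context: $q$ is a prime power, $\mathbb F_q$ the field of order $q$, $\mathbb F_q^*=\mathbb F_q\setminus\{0\}$, $m\ge2$, $[m]=\{1,\dots,m\}$, $\mathrm{supp}(v)=\{i:v_i\ne0\}$. For nonempty $P\subseteq[m]$, $\Delta_P=\{v\in\mathbb F_q^m:\mathrm{supp}(v)\subseteq P\}$, $\Delta_P^c=\mathbb F_q^m\setminus\Delta_P$. $A,B,C$ are nonempty subsets of $[m]$. Let $\mathcal N_2=\{(w_2+\omega,w_3,w_1)\in\mathbb F_q^{3m}: w_1\in\Delta_A^c,\ w_2\in\Delta_B,\ w_3\in\Delta_C,\ \omega\in\{\mathbf 0,w_1\}\}$ (closed under multiplication by $\mathbb F_q^*$), let $\overline{\mathcal N}_2$ contain exactly one element of each class $\{\alpha x:\alpha\in\mathbb F_q^*\}$, $x\in\mathcal N_2$, let $G$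 be the $3m\times|\overline{\mathcal N}_2|$ matrix whose columns are the elements of $\overline{\mathcal N}_2$, and let $\mathcal C_{\overline{\mathcal N}_2}$ be the row span of $G$ over $\mathbb F_q$. The code has locality $r$ (with respect to $G$) if $r$ is the least positive integer such that every column of $G$ is an $\mathbb F_q$-linear combination of at most $r$ other columns of $G$; a $q$-ary $[n,k,d]$ locally repairable code with locality $r$ is a linear $[n,k,d]$ code (length, dimension, minimum Hamming distance) with locality $r$. *)

theory Defs
  imports Complex_Main "HOL-Library.Function_Algebras"
begin

text \<open>Vectors of F_q^m are functions nat => 'a vanishing outside [m] = {1..m}.\<close>

definition Fvec :: "nat \<Rightarrow> (nat \<Rightarrow> 'a::zero) set" where
  "Fvec m = {v. \<forall>i. i \<notin> {1..m} \<longrightarrow> v i = 0}"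

definition supp :: "(nat \<Rightarrow> 'a::zero) \<Rightarrow> nat set" where
  "supp v = {i. v i \<noteq> 0}"

definition Delta :: "nat \<Rightarrow> nat set \<Rightarrow> (nat \<Rightarrow> 'a::zero) set" where
  "Delta m P = {v \<in> Fvec m. supp v \<subseteq> P}"

definition Deltac :: "nat \<Rightarrow> nat set \<Rightarrow> (nat \<Rightarrow> 'a::zero) set" where
  "Deltac m P = Fvec m - Delta m P"

definition concat3 :: "nat \<Rightarrow> (nat \<Rightarrow> 'a::zero) \<Rightarrow> (nat \<Rightarrow> 'a) \<Rightarrow> (nat \<Rightarrow> 'a) \<Rightarrow> nat \<Rightarrow> 'a" where
  "concat3 m u v w = (\<lambda>i. if 1 \<le> i \<and> i \<le> m then u i
                          else if m < i \<and> i \<le> 2*m then v (i - m)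
                          else if 2*m < i \<and> i \<le> 3*m then w (i - 2*m) else 0)"

definition N2 :: "nat \<Rightarrow> nat set \<Rightarrow> nat set \<Rightarrow> nat set \<Rightarrow> (nat \<Rightarrow> 'a::field) set" where
  "N2 m A B C = {concat3 m (\<lambda>i. w2 i + om i) w3 w1 | w1 w2 w3 om.
      w1 \<in> Deltac m A \<and> w2 \<in> Delta m B \<and> w3 \<in> Delta m C \<and> om \<in> {(\<lambda>_. 0), w1}}"

definition is_projective_rep :: "(nat \<Rightarrow> 'a::field) set \<Rightarrow> (nat \<Rightarrow> 'a) set \<Rightarrow> bool" where
  "is_projective_rep X Nbar \<longleftrightarrow> Nbar \<subseteq> X \<and>
     (\<forall>x\<in>X. \<exists>!y. y \<in> Nbar \<and> (\<exists>\<alpha>. \<alpha> \<noteq> 0 \<and> y = (\<lambda>i. \<alpha> * x i)))"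

text \<open>Row span of the 3m x |Nbar| matrix G whose columns are the elements of Nbar.
  Codewords are indexed by the columns (coordinates outside Nbar are 0);
  the codeword with coefficient vector x (over the 3m rows) is c |-> sum_i x_i c_i.\<close>

definition code :: "nat \<Rightarrow> (nat \<Rightarrow> 'a::field) set \<Rightarrow> ((nat \<Rightarrow> 'a) \<Rightarrow> 'a) set" where
  "code m Nbar = (\<lambda>x. \<lambda>c. if c \<in> Nbar then (\<Sum>i\<in>{1..3*m}. x i * c i) else 0) ` Fvec (3*m)"

definition hweight :: "(nat \<Rightarrow> 'a::field) set \<Rightarrow> ((nat \<Rightarrow> 'a) \<Rightarrow> 'a) \<Rightarrow> nat" where
  "hweight Nbar f = card {c \<in> Nbar. f c \<noteq> 0}"

definition code_dim :: "((nat \<Rightarrow> 'a::field) \<Rightarrow> 'a) set \<Rightarrow> nat" where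
  "code_dim V = vector_space.dim (\<lambda>(a::'a) f. (\<lambda>c. a * f c)) V"

definition min_dist :: "(nat \<Rightarrow> 'a::field) set \<Rightarrow> ((nat \<Rightarrow> 'a) \<Rightarrow> 'a) set \<Rightarrow> nat \<Rightarrow> bool" where
  "min_dist Nbar V d \<longleftrightarrow> (\<exists>f\<in>V. f \<noteq> (\<lambda>_. 0) \<and> hweight Nbar f = d) \<and>
      (\<forall>f\<in>V. f \<noteq> (\<lambda>_. 0) \<longrightarrow> d \<le> hweight Nbar f)"

definition locality_le :: "(nat \<Rightarrow> 'a::field) set \<Rightarrow> nat \<Rightarrow> bool" where
  "locality_le Nbar r \<longleftrightarrow> (\<forall>c\<in>Nbar. \<exists>S a. S \<subseteq> Nbar - {c} \<and> card S \<le> r \<and>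
       (\<forall>j. c j = (\<Sum>s\<in>S. a s * s j)))"

definition has_locality :: "(nat \<Rightarrow> 'a::field) set \<Rightarrow> nat \<Rightarrow> bool" where
  "has_locality Nbar r \<longleftrightarrow> 0 < r \<and> locality_le Nbar r \<and>
      (\<forall>r'. 0 < r' \<and> r' < r \<longrightarrow> \<not> locality_le Nbar r')"

definition is_LRC :: "nat \<Rightarrow> (nat \<Rightarrow> 'a::field) set \<Rightarrow> nat \<Rightarrow> nat \<Rightarrow> nat \<Rightarrow> nat \<Rightarrow> bool" where
  "is_LRC m Nbar n k d r \<longleftrightarrow> finite Nbar \<and> card Nbar = n \<and> code_dim (code m Nbar) = k \<and>
     min_dist Nbar (code m Nbar) d \<and> has_locality Nbar r"

end

theory Submission
  imports Defs "HOL-Library.FuncSet" "HOL-Library.Cardinality"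
begin

text \<open>Write \<open>N1\<close> for the vectors of \<open>N2\<close> with \<open>\<omega> = 0\<close>, and \<open>shear\<close> for the map adding
  the third block of a vector of \<open>\<bbbF>\<^sub>q\<^bsup>3m\<^esup>\<close> to its first block. Then \<open>N2\<close> is the union of \<open>N1\<close> and
  its image under the shear, disjoint because \<open>B \<subseteq> A\<close>, and \<open>N1\<close> consists of the vectors
  supported in \<open>Q\<^sub>s = B \<union> (m + C) \<union> (2m + [m])\<close> but not in \<open>Q\<^sub>p = B \<union> (m + C) \<union> (2m + A)\<close>.
  In a coordinate space \<open>\<bbbF>\<^sup>P\<close> a nonzero linear form is nonzero on \<open>(q - 1) q\<^bsup>|P|-1\<^esup>\<close> vectors,
  so the codeword with coefficient vector \<open>x\<close> has weight \<open>q\<^bsup>|B|+|C|-1\<^esup> (s(x) + s(x'))\<close>, where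
  \<open>x'\<close> is the image of \<open>x\<close> under the adjoint of the shear and \<open>s(x) \<in> {0, q\<^sup>m - q\<^bsup>|A|\<^esup>, q\<^sup>m}\<close>
  (\<open>core_weight\<close>) records whether \<open>x\<close> vanishes on \<open>Q\<^sub>s\<close>, only on \<open>Q\<^sub>p\<close>, or on neither. Minimising this
  gives the distance, and a codeword of weight \<open>0\<close> has \<open>x = 0\<close> on all \<open>2m + |C|\<close> coordinates
  used by the columns, which gives the dimension. For the locality every column is split into
  two (for \<open>q = 2\<close> three) elements of \<open>N2\<close> none of which is proportional to it; for \<open>q = 2\<close>
  and \<open>[m] - A = {k}\<close> all columns have the entry \<open>1\<close> at \<open>k + 2m\<close>, which rules out locality 2.\<close>

section \<open>Coordinate subspaces\<close>

definition supported :: "nat set \<Rightarrow> (nat \<Rightarrow> 'a::zero) set" where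
  "supported P = {v. \<forall>i. i \<notin> P \<longrightarrow> v i = 0}"

lemma Delta_eq_supported: "P \<subseteq> {1..m} \<Longrightarrow> Delta m P = supported P"
  unfolding Delta_def supported_def Fvec_def supp_def by auto

lemma supported_mono: "P \<subseteq> P' \<Longrightarrow> supported P \<subseteq> supported P'"
  unfolding supported_def by blast

lemma card_supported:
  assumes "finite P"
  shows "card (supported P :: (nat \<Rightarrow> 'a::{finite,zero}) set) = CARD('a) ^ card P"
proof -
  have "bij_betw (\<lambda>v. restrict v P) (supported P) (PiE P (\<lambda>_. UNIV :: 'a set))"
  proof (rule bij_betwI)
    show "(\<lambda>v. restrict v P) \<in> supported P \<rightarrow> PiE P (\<lambda>_. UNIV)" by simp
    show "(\<lambda>f i. if i \<in> P then f i else 0) \<in> PiE P (\<lambda>_. UNIV) \<rightarrow> supported P"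
      by (simp add: supported_def)
  next
    fix v :: "nat \<Rightarrow> 'a" assume "v \<in> supported P"
    then show "(\<lambda>f i. if i \<in> P then f i else 0) (restrict v P) = v"
      by (auto simp: supported_def fun_eq_iff)
  next
    fix f :: "nat \<Rightarrow> 'a" assume "f \<in> PiE P (\<lambda>_. UNIV)"
    then show "restrict ((\<lambda>f i. if i \<in> P then f i else 0) f) P = f"
      by (auto simp: fun_eq_iff PiE_def extensional_def)
  qed
  then show ?thesis
    using assms by (simp add: bij_betw_same_card card_PiE)
qed

lemma finite_supported: "finite P \<Longrightarrow> finite (supported P :: (nat \<Rightarrow> 'a::{finite,zero}) set)"
  by (rule card_ge_0_finite) (simp add: card_supported)

lemma mem_Delta_iff: "w \<in> Delta m P \<longleftrightarrow> (\<forall>i. i \<notin> P \<inter> {1..m} \<longrightarrow> w i = 0)"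
  unfolding Delta_def Fvec_def supp_def by auto

lemma Delta_full: "Delta m {1..m} = Fvec m"
  unfolding Delta_def Fvec_def supp_def by auto

lemma Delta_vanishing: "w \<in> Delta m P \<Longrightarrow> i \<notin> P \<Longrightarrow> w i = 0"
  unfolding Delta_def supp_def by auto

lemma zero_in_Delta: "(\<lambda>_. 0) \<in> Delta m P"
  unfolding Delta_def Fvec_def supp_def by auto

lemma Delta_add: "u \<in> Delta m P \<Longrightarrow> v \<in> Delta m P \<Longrightarrow> (\<lambda>i. u i + v i) \<in> Delta m P"
  for u v :: "nat \<Rightarrow> 'a::monoid_add"
  unfolding mem_Delta_iff by simp

lemma Delta_uminus: "u \<in> Delta m P \<Longrightarrow> (\<lambda>i. - u i) \<in> Delta m P"
  for u :: "nat \<Rightarrow> 'a::group_add"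
  unfolding mem_Delta_iff by simp

lemma Delta_smult: "w \<in> Delta m P \<Longrightarrow> (\<lambda>i. \<alpha> * w i) \<in> Delta m P"
  for w :: "nat \<Rightarrow> 'a::mult_zero"
  unfolding Delta_def Fvec_def supp_def by auto

lemma Deltac_smult: "w \<in> Deltac m A \<Longrightarrow> \<alpha> \<noteq> 0 \<Longrightarrow> (\<lambda>i. \<alpha> * w i) \<in> Deltac m A"
  for w :: "nat \<Rightarrow> 'a::field"
  unfolding Deltac_def Delta_def Fvec_def supp_def by auto

lemma Deltac_nonzero_outside:
  assumes "w \<in> Deltac m A"
  obtains k where "k \<in> {1..m}" "k \<notin> A" "w k \<noteq> 0"
  using assms unfolding Deltac_def Delta_def Fvec_def supp_def by auto

lemma Fvec_eqI: "u \<in> Fvec m \<Longrightarrow> v \<in> Fvec m \<Longrightarrow> \<forall>i\<in>{1..m}. u i = v i \<Longrightarrow> u = v"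
  unfolding Fvec_def by (auto simp: fun_eq_iff)

definition unit_vec :: "nat \<Rightarrow> nat \<Rightarrow> 'a::zero_neq_one" where
  "unit_vec j = (\<lambda>i. if i = j then 1 else 0)"

lemma Delta_avoid:
  assumes "B \<noteq> {}" "B \<subseteq> {1..m}"
  obtains b :: "nat \<Rightarrow> 'a::zero_neq_one" where "b \<in> Delta m B" "b \<noteq> v"
proof -
  obtain j where j: "j \<in> B" using assms(1) by blast
  have "unit_vec j \<in> Delta m B" "(\<lambda>_. 0) \<in> Delta m B" "unit_vec j \<noteq> (\<lambda>_. 0 :: 'a)"
    using j assms(2) by (auto simp: Delta_def Fvec_def supp_def unit_vec_def fun_eq_iff)
  then show ?thesis using that by metis
qed

definition dot :: "nat set \<Rightarrow> (nat \<Rightarrow> 'a::comm_ring) \<Rightarrow> (nat \<Rightarrow> 'a) \<Rightarrow> 'a" where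
  "dot I x v = (\<Sum>i\<in>I. x i * v i)"

lemma dot_fun_upd:
  assumes "finite I" "j \<in> I"
  shows "dot I x (v(j := s)) = dot I x (v(j := 0)) + x j * s"
proof -
  have "\<And>s. dot I x (v(j := s)) = x j * s + (\<Sum>i\<in>I - {j}. x i * v i)"
    unfolding dot_def using assms by (simp add: sum.remove[of I j])
  then show ?thesis by simp
qed

lemma dot_smult_right: "dot I x (\<lambda>i. \<alpha> * v i) = \<alpha> * dot I x v"
  unfolding dot_def by (simp add: sum_distrib_left algebra_simps)

lemma dot_unit_vec: "finite I \<Longrightarrow> j \<in> I \<Longrightarrow> dot I (unit_vec j) c = c j"
  for c :: "nat \<Rightarrow> 'a::comm_ring_1"
proof -
  assume "finite I" "j \<in> I"
  moreover have "dot I (unit_vec j) c = (\<Sum>i\<in>I. if i = j then c j else 0)"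
    unfolding dot_def by (rule sum.cong) (auto simp: unit_vec_def)
  ultimately show ?thesis by simp
qed

lemma dot_eq_0_if_vanishing:
  assumes "\<forall>j\<in>P. x j = 0" "v \<in> supported P"
  shows "dot I x v = 0"
proof -
  have "x i * v i = 0" for i
    using assms by (cases "i \<in> P") (auto simp: supported_def)
  then show ?thesis by (simp add: dot_def)
qed

text \<open>Fix the coordinate \<open>j\<close> where \<open>x\<close> does not vanish: the value of the linear form and
  the remaining coordinates determine \<open>v\<close>, and they can be prescribed freely.\<close>

lemma card_supported_dot_nonzero_nonvanishing:
  fixes x :: "nat \<Rightarrow> 'a::{finite,field}"
  assumes I: "finite I" "P \<subseteq> I" and j: "j \<in> P" "x j \<noteq> 0"
  shows "card {v \<in> supported P. dot I x v \<noteq> 0} = (CARD('a) - 1) * CARD('a) ^ (card P - 1)"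
proof -
  have jI: "j \<in> I" using I j by blast
  have upd: "dot I x (u(j := (t - dot I x u) / x j)) = t" if "u j = 0" for u t
  proof -
    have "u(j := 0) = u" using that by auto
    then show ?thesis
      using dot_fun_upd[OF I(1) jI, of x u] j(2) by simp
  qed
  have "bij_betw (\<lambda>v. (dot I x v, v(j := 0))) {v \<in> supported P. dot I x v \<noteq> 0}
          ((UNIV - {0}) \<times> supported (P - {j}))"
  proof (rule bij_betwI)
    show "(\<lambda>v. (dot I x v, v(j := 0))) \<in> {v \<in> supported P. dot I x v \<noteq> 0}
            \<rightarrow> (UNIV - {0}) \<times> supported (P - {j})"
      by (auto simp: supported_def)
    show "(\<lambda>(t, u). u(j := (t - dot I x u) / x j)) \<in> (UNIV - {0}) \<times> supported (P - {j})
            \<rightarrow> {v \<in> supported P. dot I x v \<noteq> 0}"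
      using upd j(1) by (auto simp: supported_def)
  next
    fix v :: "nat \<Rightarrow> 'a"
    have "dot I x v - dot I x (v(j := 0)) = x j * v j"
      using dot_fun_upd[OF I(1) jI, of x v "v j"] by simp
    then have "(dot I x v - dot I x (v(j := 0))) / x j = v j"
      using j(2) by simp
    then show "(\<lambda>(t, u). u(j := (t - dot I x u) / x j)) (dot I x v, v(j := 0)) = v"
      by simp
  next
    fix p :: "'a \<times> (nat \<Rightarrow> 'a)" assume "p \<in> (UNIV - {0}) \<times> supported (P - {j})"
    then obtain t u where "p = (t, u)" "u j = 0" by (auto simp: supported_def)
    then show "(\<lambda>v. (dot I x v, v(j := 0))) ((\<lambda>(t, u). u(j := (t - dot I x u) / x j)) p) = p"
      using upd by auto
  qed
  moreover have "finite P" using I finite_subset by blast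
  ultimately show ?thesis
    using j by (simp add: bij_betw_same_card card_cartesian_product card_supported card_Diff_subset)
qed

lemma card_supported_dot_nonzero:
  fixes x :: "nat \<Rightarrow> 'a::{finite,field}"
  assumes "finite I" "P \<subseteq> I"
  shows "card {v \<in> supported P. dot I x v \<noteq> 0} =
    (if \<exists>j\<in>P. x j \<noteq> 0 then (CARD('a) - 1) * CARD('a) ^ (card P - 1) else 0)"
proof (cases "\<exists>j\<in>P. x j \<noteq> 0")
  case False
  then have "{v \<in> supported P. dot I x v \<noteq> 0} = {}"
    using dot_eq_0_if_vanishing[of P x] by auto
  with False show ?thesis by (metis card.empty)
qed (use card_supported_dot_nonzero_nonvanishing[OF assms] in auto)

section \<open>Projective representatives and locality\<close>

lemma projective_repE:
  assumes "is_projective_rep X Nbar" "x \<in> X"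
  obtains \<gamma> where "\<gamma> \<noteq> 0" "(\<lambda>i. \<gamma> * x i) \<in> Nbar"
  using assms unfolding is_projective_rep_def by blast

lemma projective_rep_subset: "is_projective_rep X Nbar \<Longrightarrow> Nbar \<subseteq> X"
  unfolding is_projective_rep_def by blast

lemma projective_rep_eq_if_proportional:
  assumes rep: "is_projective_rep X Nbar" and y: "y \<in> Nbar" "y' \<in> Nbar"
    and \<alpha>: "\<alpha> \<noteq> 0" "y' = (\<lambda>i. \<alpha> * y i)"
  shows "y' = y"
proof -
  let ?rep_of_y = "\<lambda>z. z \<in> Nbar \<and> (\<exists>\<beta>. \<beta> \<noteq> 0 \<and> z = (\<lambda>i. \<beta> * y i))"
  have "\<exists>!z. ?rep_of_y z"
    using rep y(1) unfolding is_projective_rep_def by blast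
  moreover have "?rep_of_y y" using y(1) by (auto intro!: exI[of _ 1])
  moreover have "?rep_of_y y'" using y(2) \<alpha> by blast
  ultimately show ?thesis by blast
qed

lemma projective_rep_smult_inj:
  assumes rep: "is_projective_rep X Nbar" and nonzero: "(\<lambda>_. 0) \<notin> X"
    and ne: "\<alpha> \<noteq> 0" "\<beta> \<noteq> 0" and y: "y \<in> Nbar" "y' \<in> Nbar"
    and eq: "(\<lambda>i. \<alpha> * y i) = (\<lambda>i. \<beta> * y' i)"
  shows "\<alpha> = \<beta> \<and> y = y'"
proof -
  have "y' = (\<lambda>i. (\<alpha> / \<beta>) * y i)" using ne eq by (auto simp: fun_eq_iff field_simps)
  moreover have "\<alpha> / \<beta> \<noteq> 0" using ne by simp
  ultimately have yy: "y' = y"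
    using projective_rep_eq_if_proportional[OF rep y] by blast
  have "y \<noteq> (\<lambda>_. 0)" using y projective_rep_subset[OF rep] nonzero by blast
  then obtain i where "y i \<noteq> 0" by auto
  with eq yy show ?thesis by (metis mult_right_cancel)
qed

text \<open>The multiples of the representatives partition \<open>X\<close> into classes of size \<open>q - 1\<close>.\<close>

lemma card_filter_projective_rep:
  fixes X Nbar :: "(nat \<Rightarrow> 'a::{finite,field}) set"
  assumes rep: "is_projective_rep X Nbar" and nonzero: "(\<lambda>_. 0) \<notin> X"
    and closed: "\<And>x \<alpha>. x \<in> X \<Longrightarrow> \<alpha> \<noteq> 0 \<Longrightarrow> (\<lambda>i. \<alpha> * x i) \<in> X"
    and invariant: "\<And>x \<alpha>. \<alpha> \<noteq> 0 \<Longrightarrow> R (\<lambda>i. \<alpha> * x i) = R x"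
  shows "card {x \<in> X. R x} = (CARD('a) - 1) * card {y \<in> Nbar. R y}"
proof -
  have sub: "Nbar \<subseteq> X" using rep by (rule projective_rep_subset)
  have "bij_betw (\<lambda>(\<alpha>, y) i. \<alpha> * y i) ((UNIV - {0}) \<times> {y \<in> Nbar. R y}) {x \<in> X. R x}"
    unfolding bij_betw_def
  proof
    show "inj_on (\<lambda>(\<alpha>, y) i. \<alpha> * y i) ((UNIV - {0}) \<times> {y \<in> Nbar. R y})"
    proof (rule inj_onI)
      fix p p' :: "'a \<times> (nat \<Rightarrow> 'a)"
      assume "p \<in> (UNIV - {0}) \<times> {y \<in> Nbar. R y}" "p' \<in> (UNIV - {0}) \<times> {y \<in> Nbar. R y}"
        and "(case p of (\<alpha>, y) \<Rightarrow> \<lambda>i. \<alpha> * y i) = (case p' of (\<alpha>, y) \<Rightarrow> \<lambda>i. \<alpha> * y i)"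
      then show "p = p'"
        using projective_rep_smult_inj[OF rep nonzero, of "fst p" "fst p'" "snd p" "snd p'"] by (auto simp: case_prod_beta prod_eq_iff)
    qed
    show "(\<lambda>(\<alpha>, y) i. \<alpha> * y i) ` ((UNIV - {0}) \<times> {y \<in> Nbar. R y}) = {x \<in> X. R x}"
    proof (intro equalityI subsetI)
      fix x assume "x \<in> (\<lambda>(\<alpha>, y) i. \<alpha> * y i) ` ((UNIV - {0}) \<times> {y \<in> Nbar. R y})"
      then obtain \<alpha> y where "\<alpha> \<noteq> 0" "y \<in> Nbar" "R y" "x = (\<lambda>i. \<alpha> * y i)" by auto
      then show "x \<in> {x \<in> X. R x}" using sub closed invariant by auto
    next
      fix x assume x: "x \<in> {x \<in> X. R x}"
      then obtain \<gamma> where \<gamma>: "\<gamma> \<noteq> 0" "(\<lambda>i. \<gamma> * x i) \<in> Nbar"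
        using rep by (auto elim: projective_repE)
      moreover have "x = (\<lambda>i. inverse \<gamma> * (\<gamma> * x i))" using \<gamma>(1) by (simp add: field_simps)
      ultimately show "x \<in> (\<lambda>(\<alpha>, y) i. \<alpha> * y i) ` ((UNIV - {0}) \<times> {y \<in> Nbar. R y})"
        using x invariant by (auto intro!: image_eqI[where x = "(inverse \<gamma>, \<lambda>i. \<gamma> * x i)"])
    qed
  qed
  then have "card ((UNIV - {0::'a}) \<times> {y \<in> Nbar. R y}) = card {x \<in> X. R x}"
    by (rule bij_betw_same_card)
  then show ?thesis by (simp add: card_cartesian_product card_Diff_subset)
qed

definition is_nonproportional_sum :: "(nat \<Rightarrow> 'a::field) set \<Rightarrow> (nat \<Rightarrow> 'a) \<Rightarrow> (nat \<Rightarrow> 'a) list \<Rightarrow> bool" where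
  "is_nonproportional_sum X c Ys \<longleftrightarrow>
    set Ys \<subseteq> X \<and> (\<forall>y\<in>set Ys. \<forall>\<mu>. y \<noteq> (\<lambda>j. \<mu> * c j)) \<and> c = (\<lambda>j. \<Sum>y\<leftarrow>Ys. y j)"

text \<open>Each summand is a nonzero multiple of its representative, and this representative is not
  \<open>c\<close> because the summand is not proportional to \<open>c\<close>.\<close>

lemma locality_witness_of_sum:
  assumes rep: "is_projective_rep X Nbar" and c: "c \<in> Nbar"
    and "is_nonproportional_sum X c Ys"
  shows "\<exists>S a. S \<subseteq> Nbar - {c} \<and> card S \<le> length Ys \<and> (\<forall>j. c j = (\<Sum>s\<in>S. a s * s j))"
proof -
  have Ys: "set Ys \<subseteq> X" and not_proportional: "\<forall>y\<in>set Ys. \<forall>\<mu>. y \<noteq> (\<lambda>j. \<mu> * c j)"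
    and sum: "c = (\<lambda>j. \<Sum>y\<leftarrow>Ys. y j)"
    using assms(3) unfolding is_nonproportional_sum_def by blast+
  let ?I = "{..<length Ys}"
  have "\<forall>i\<in>?I. \<exists>\<gamma>. \<gamma> \<noteq> 0 \<and> (\<lambda>j. \<gamma> * (Ys ! i) j) \<in> Nbar"
  proof
    fix i assume "i \<in> ?I"
    then have "Ys ! i \<in> X" using Ys by auto
    with rep show "\<exists>\<gamma>. \<gamma> \<noteq> 0 \<and> (\<lambda>j. \<gamma> * (Ys ! i) j) \<in> Nbar"
      by (auto elim: projective_repE)
  qed
  then obtain \<gamma> where \<gamma>: "\<forall>i\<in>?I. \<gamma> i \<noteq> 0 \<and> (\<lambda>j. \<gamma> i * (Ys ! i) j) \<in> Nbar"
    by (rule bchoice[elim_format]) blast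
  define r where "r i = (\<lambda>j. \<gamma> i * (Ys ! i) j)" for i
  define a where "a s = (\<Sum>i\<in>{i \<in> ?I. r i = s}. inverse (\<gamma> i))" for s
  have "r i \<noteq> c" if "i \<in> ?I" for i
  proof
    assume "r i = c"
    then have "Ys ! i = (\<lambda>j. inverse (\<gamma> i) * c j)"
      using \<gamma> that by (auto simp: r_def fun_eq_iff field_simps)
    then show False using not_proportional that by auto
  qed
  then have "r ` ?I \<subseteq> Nbar - {c}" using \<gamma> by (auto simp: r_def)
  moreover have "card (r ` ?I) \<le> length Ys" using card_image_le[of ?I r] by simp
  moreover have "c j = (\<Sum>s\<in>r ` ?I. a s * s j)" for j
  proof -
    have "(\<Sum>s\<in>r ` ?I. a s * s j) = (\<Sum>s\<in>r ` ?I. \<Sum>i\<in>{i \<in> ?I. r i = s}. inverse (\<gamma> i) * r i j)"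
      unfolding a_def sum_distrib_right by (intro sum.cong) auto
    also have "\<dots> = (\<Sum>i\<in>?I. inverse (\<gamma> i) * r i j)"
      by (rule sum.image_gen[symmetric]) simp
    also have "\<dots> = (\<Sum>i\<in>?I. (Ys ! i) j)"
      using \<gamma> by (intro sum.cong) (auto simp: r_def)
    also have "\<dots> = c j"
      using sum by (simp add: sum_list_sum_nth atLeast0LessThan)
    finally show ?thesis by simp
  qed
  ultimately show ?thesis by blast
qed

lemma locality_le_if_nonproportional_sums:
  assumes rep: "is_projective_rep X Nbar"
    and sums: "\<And>c. c \<in> Nbar \<Longrightarrow> \<exists>Ys. length Ys \<le> r \<and> is_nonproportional_sum X c Ys"
  shows "locality_le Nbar r"
  unfolding locality_le_def
proof
  fix c assume c: "c \<in> Nbar"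
  then obtain Ys where Ys: "length Ys \<le> r" "is_nonproportional_sum X c Ys" using sums by blast
  obtain S a where "S \<subseteq> Nbar - {c}" "card S \<le> length Ys" "\<forall>j. c j = (\<Sum>s\<in>S. a s * s j)"
    using locality_witness_of_sum[OF rep c Ys(2)] by blast
  moreover from this(2) Ys(1) have "card S \<le> r" by simp
  ultimately show "\<exists>S a. S \<subseteq> Nbar - {c} \<and> card S \<le> r \<and> (\<forall>j. c j = (\<Sum>s\<in>S. a s * s j))"
    by blast
qed

lemma locality_leE:
  assumes "locality_le Nbar r" "c \<in> Nbar"
  obtains S a where "S \<subseteq> Nbar - {c}" "card S \<le> r" "\<forall>j. c j = (\<Sum>s\<in>S. a s * s j)"
  using assms unfolding locality_le_def by (elim ballE exE conjE) auto

lemma not_locality_le_1: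
  assumes rep: "is_projective_rep X Nbar" and nonzero: "(\<lambda>_. 0) \<notin> X" and "Nbar \<noteq> {}"
  shows "\<not> locality_le Nbar 1"
proof
  assume "locality_le Nbar 1"
  moreover obtain c where c: "c \<in> Nbar" using \<open>Nbar \<noteq> {}\<close> by blast
  ultimately obtain S a where S: "S \<subseteq> Nbar - {c}" "card S \<le> 1" and c_eq: "\<forall>j. c j = (\<Sum>s\<in>S. a s * s j)"
    by (rule locality_leE)
  have "c \<noteq> (\<lambda>_. 0)" using c nonzero projective_rep_subset[OF rep] by blast
  have "finite S \<and> S \<noteq> {}"
  proof (rule ccontr)
    assume "\<not> (finite S \<and> S \<noteq> {})"
    then have "c = (\<lambda>_. 0)" using c_eq by auto
    with \<open>c \<noteq> (\<lambda>_. 0)\<close> show False by blast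
  qed
  then have "card S = 1" using S(2) by (simp add: le_antisym Suc_leI card_gt_0_iff)
  then obtain s where s: "S = {s}" by (rule card_1_singletonE)
  have "c = (\<lambda>j. a s * s j)" using c_eq s by auto
  moreover have "a s \<noteq> 0" using \<open>c \<noteq> (\<lambda>_. 0)\<close> calculation by auto
  ultimately have "c = s" using projective_rep_eq_if_proportional[OF rep] S(1) s c by blast
  then show False using S(1) s by blast
qed

lemma two_le_card_field: "2 \<le> CARD('a::{finite,field})"
proof -
  have "card {0::'a, 1} \<le> CARD('a)" by (rule card_mono) simp_all
  then show ?thesis by simp
qed

lemma binary_field_cases:
  assumes "CARD('a::{finite,field}) = 2"
  shows "(x::'a) = 0 \<or> x = 1"
proof -
  have "{0::'a, 1} = UNIV"
    using assms by (intro card_subset_eq) simp_all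
  then show ?thesis by blast
qed

lemma binary_field_one_add_one:
  assumes "CARD('a::{finite,field}) = 2"
  shows "1 + 1 = (0::'a)"
  using binary_field_cases[OF assms, of "1 + 1"] by (metis add_cancel_right_right one_neq_zero)

lemma binary_field_add_self:
  assumes "CARD('a::{finite,field}) = 2"
  shows "x + x = (0::'a)"
proof -
  have "x + x = (1 + 1) * x" by (simp add: algebra_simps)
  then show ?thesis using binary_field_one_add_one[OF assms] by simp
qed

text \<open>Over \<open>\<bbbF>\<^sub>2\<close> the coefficients of a combination of at most two columns that reproduces
  a common coordinate \<open>1\<close> sum to \<open>1\<close>, so exactly one of them is nonzero.\<close>

lemma binary_not_locality_le_2:
  fixes Nbar :: "(nat \<Rightarrow> 'a::{finite,field}) set"
  assumes q: "CARD('a) = 2" and "Nbar \<noteq> {}" and one: "\<forall>v\<in>Nbar. v k = 1"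
  shows "\<not> locality_le Nbar 2"
proof
  assume "locality_le Nbar 2"
  moreover obtain c where c: "c \<in> Nbar" using \<open>Nbar \<noteq> {}\<close> by blast
  ultimately obtain S a where S: "S \<subseteq> Nbar - {c}" "card S \<le> 2" and c_eq: "\<forall>j. c j = (\<Sum>s\<in>S. a s * s j)"
    by (rule locality_leE)
  have "(\<Sum>s\<in>S. a s * s k) = (\<Sum>s\<in>S. a s)"
    using S(1) one by (intro sum.cong) auto
  moreover have "c k = (\<Sum>s\<in>S. a s * s k)" using c_eq by blast
  ultimately have coeff_sum: "(\<Sum>s\<in>S. a s) = 1"
    using one c by metis
  have S_ne_c: "s \<noteq> c" if "s \<in> S" for s using that S(1) by auto
  have "finite S" using coeff_sum by (metis sum.infinite zero_neq_one)
  have "card S = 0 \<or> card S = 1 \<or> card S = 2" using S(2) by linarith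
  then show False
  proof (elim disjE)
    assume "card S = 0"
    then show False using coeff_sum \<open>finite S\<close> by simp
  next
    assume "card S = 1"
    then obtain s where "S = {s}" by (rule card_1_singletonE)
    then show False using coeff_sum c_eq S_ne_c by (auto simp: fun_eq_iff)
  next
    assume "card S = 2"
    then obtain s t where st: "S = {s, t}" "s \<noteq> t" by (meson card_2_iff)
    have "a s = 0 \<or> a s = 1" "a t = 0 \<or> a t = 1" using binary_field_cases[OF q] by blast+
    then have "(a s = 1 \<and> a t = 0) \<or> (a s = 0 \<and> a t = 1)"
      using coeff_sum st binary_field_one_add_one[OF q] by auto
    then have "c = s \<or> c = t" using c_eq st by (auto simp: fun_eq_iff)
    then show False using S(1) st by blast
  qed
qed

section \<open>Block vectors and the shear\<close>

definition concat_supp :: "nat \<Rightarrow> nat set \<Rightarrow> nat set \<Rightarrow> nat set \<Rightarrow> nat set" where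
  "concat_supp m P1 P2 P3 = P1 \<union> (\<lambda>i. i + m) ` P2 \<union> (\<lambda>i. i + 2*m) ` P3"

lemma mem_image_add_iff:
  fixes j k :: nat
  assumes "0 \<notin> P"
  shows "j \<in> (\<lambda>i. i + k) ` P \<longleftrightarrow> k < j \<and> j - k \<in> P"
proof
  assume "j \<in> (\<lambda>i. i + k) ` P"
  then obtain i where "i \<in> P" "j = i + k" by blast
  moreover have "i \<noteq> 0" using \<open>i \<in> P\<close> assms by metis
  ultimately show "k < j \<and> j - k \<in> P" by simp
next
  assume "k < j \<and> j - k \<in> P"
  then show "j \<in> (\<lambda>i. i + k) ` P" by (intro image_eqI[of _ _ "j - k"]) auto
qed

lemma mem_concat_supp_iff:
  assumes "P1 \<subseteq> {1..m}" "P2 \<subseteq> {1..m}" "P3 \<subseteq> {1..m}"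
  shows "j \<in> concat_supp m P1 P2 P3 \<longleftrightarrow>
    (j \<le> m \<and> j \<in> P1) \<or> (m < j \<and> j \<le> 2*m \<and> j - m \<in> P2) \<or> (2*m < j \<and> j \<le> 3*m \<and> j - 2*m \<in> P3)"
proof -
  have "j \<in> (\<lambda>i. i + m) ` P2 \<longleftrightarrow> m < j \<and> j - m \<in> P2"
    "j \<in> (\<lambda>i. i + 2*m) ` P3 \<longleftrightarrow> 2*m < j \<and> j - 2*m \<in> P3"
    using assms by (auto intro!: mem_image_add_iff)
  then show ?thesis
    using assms unfolding concat_supp_def by (auto simp: subset_iff)
qed

lemma concat_supp_subset:
  "P1 \<subseteq> {1..m} \<Longrightarrow> P2 \<subseteq> {1..m} \<Longrightarrow> P3 \<subseteq> {1..m} \<Longrightarrow> concat_supp m P1 P2 P3 \<subseteq> {1..3*m}"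
  by (auto simp: concat_supp_def)

lemma concat_supp_mono:
  "P1 \<subseteq> P1' \<Longrightarrow> P2 \<subseteq> P2' \<Longrightarrow> P3 \<subseteq> P3' \<Longrightarrow> concat_supp m P1 P2 P3 \<subseteq> concat_supp m P1' P2' P3'"
  by (auto simp: concat_supp_def)

lemma card_concat_supp:
  assumes "P1 \<subseteq> {1..m}" "P2 \<subseteq> {1..m}" "P3 \<subseteq> {1..m}"
  shows "card (concat_supp m P1 P2 P3) = card P1 + card P2 + card P3"
proof -
  have fin: "finite P1" "finite P2" "finite P3"
    using assms finite_subset by blast+
  have "P1 \<inter> (\<lambda>i. i + m) ` P2 = {}" "(P1 \<union> (\<lambda>i. i + m) ` P2) \<inter> (\<lambda>i. i + 2*m) ` P3 = {}"
    using assms by fastforce+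
  then have "card (concat_supp m P1 P2 P3) = card P1 + card ((\<lambda>i. i + m) ` P2) + card ((\<lambda>i. i + 2*m) ` P3)"
    unfolding concat_supp_def using fin by (simp add: card_Un_disjoint)
  then show ?thesis by (simp add: card_image)
qed

lemma concat3_eq_smult_iff:
  fixes u v w :: "nat \<Rightarrow> 'a::mult_zero"
  shows "concat3 m u v w = (\<lambda>j. \<mu> * concat3 m u' v' w' j) \<longleftrightarrow>
    (\<forall>i\<in>{1..m}. u i = \<mu> * u' i \<and> v i = \<mu> * v' i \<and> w i = \<mu> * w' i)"
proof
  assume eq: "concat3 m u v w = (\<lambda>j. \<mu> * concat3 m u' v' w' j)"
  show "\<forall>i\<in>{1..m}. u i = \<mu> * u' i \<and> v i = \<mu> * v' i \<and> w i = \<mu> * w' i"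
  proof
    fix i assume "i \<in> {1..m}"
    then show "u i = \<mu> * u' i \<and> v i = \<mu> * v' i \<and> w i = \<mu> * w' i"
      using fun_cong[OF eq, of i] fun_cong[OF eq, of "i + m"] fun_cong[OF eq, of "i + 2*m"]
      by (simp add: concat3_def)
  qed
next
  assume H: "\<forall>i\<in>{1..m}. u i = \<mu> * u' i \<and> v i = \<mu> * v' i \<and> w i = \<mu> * w' i"
  show "concat3 m u v w = (\<lambda>j. \<mu> * concat3 m u' v' w' j)"
  proof
    fix j
    consider "j \<in> {1..m}" | "m < j" "j \<le> 2*m" "j - m \<in> {1..m}" | "2*m < j" "j \<le> 3*m" "j - 2*m \<in> {1..m}"
      | "\<not> (1 \<le> j \<and> j \<le> 3*m)"
      by force
    then show "concat3 m u v w j = \<mu> * concat3 m u' v' w' j"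
      using H by cases (auto simp: concat3_def)
  qed
qed

lemma concat3_eq_smult_same_third:
  fixes w :: "nat \<Rightarrow> 'a::field"
  assumes "concat3 m u v w = (\<lambda>j. \<mu> * concat3 m u' v' w j)" "k \<in> {1..m}" "w k \<noteq> 0"
  shows "\<forall>i\<in>{1..m}. u i = u' i \<and> v i = v' i"
proof -
  have eq: "\<forall>i\<in>{1..m}. u i = \<mu> * u' i \<and> v i = \<mu> * v' i \<and> w i = \<mu> * w i"
    using assms(1) unfolding concat3_eq_smult_iff .
  then have "\<mu> = 1" using assms(2,3) by force
  with eq show ?thesis by simp
qed

lemma concat3_smult:
  fixes u v w :: "nat \<Rightarrow> 'a::mult_zero"
  shows "(\<lambda>j. \<alpha> * concat3 m u v w j) = concat3 m (\<lambda>i. \<alpha> * u i) (\<lambda>i. \<alpha> * v i) (\<lambda>i. \<alpha> * w i)"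
  by (simp add: concat3_def fun_eq_iff)

lemma inj_on_concat3:
  "inj_on (\<lambda>(u, v, w). concat3 m u v w) (Fvec m \<times> Fvec m \<times> (Fvec m :: (nat \<Rightarrow> 'a::semiring_1) set))"
proof (rule inj_onI)
  fix p p' :: "(nat \<Rightarrow> 'a) \<times> (nat \<Rightarrow> 'a) \<times> (nat \<Rightarrow> 'a)"
  assume "p \<in> Fvec m \<times> Fvec m \<times> Fvec m" "p' \<in> Fvec m \<times> Fvec m \<times> Fvec m"
    and eq: "(\<lambda>(u, v, w). concat3 m u v w) p = (\<lambda>(u, v, w). concat3 m u v w) p'"
  moreover obtain u v w u' v' w' where "p = (u, v, w)" "p' = (u', v', w')" by (cases p, cases p')
  moreover from this eq have "\<forall>i\<in>{1..m}. u i = u' i \<and> v i = v' i \<and> w i = w' i"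
    using concat3_eq_smult_iff[of m u v w 1 u' v' w'] by simp
  ultimately show "p = p'"
    by (auto simp: Fvec_def fun_eq_iff)
qed

lemma supported_concat_supp:
  assumes "P1 \<subseteq> {1..m}" "P2 \<subseteq> {1..m}" "P3 \<subseteq> {1..m}"
  shows "supported (concat_supp m P1 P2 P3) =
    (\<lambda>(u, v, w). concat3 m u v w) ` (Delta m P1 \<times> Delta m P2 \<times> (Delta m P3 :: (nat \<Rightarrow> 'a::zero) set))"
proof (intro equalityI subsetI)
  fix x :: "nat \<Rightarrow> 'a" assume x: "x \<in> supported (concat_supp m P1 P2 P3)"
  define block where "block k = (\<lambda>i. if i \<in> {1..m} then x (i + k*m) else 0)" for k
  have "x = concat3 m (block 0) (block 1) (block 2)"
    using x assms by (auto simp: fun_eq_iff concat3_def block_def supported_def mem_concat_supp_iff)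
  moreover have "block 0 \<in> Delta m P1" "block 1 \<in> Delta m P2" "block 2 \<in> Delta m P3"
    using x assms by (auto simp: Delta_eq_supported supported_def block_def mem_concat_supp_iff)
  ultimately show "x \<in> (\<lambda>(u, v, w). concat3 m u v w) ` (Delta m P1 \<times> Delta m P2 \<times> Delta m P3)"
    by (intro image_eqI[where x = "(block 0, block 1, block 2)"]) simp_all
qed (use assms in \<open>auto simp: Delta_eq_supported supported_def concat3_def mem_concat_supp_iff\<close>)

definition shear :: "nat \<Rightarrow> (nat \<Rightarrow> 'a::plus) \<Rightarrow> nat \<Rightarrow> 'a" where
  "shear m v = (\<lambda>i. if 1 \<le> i \<and> i \<le> m then v i + v (i + 2*m) else v i)"

definition shear_adjoint :: "nat \<Rightarrow> (nat \<Rightarrow> 'a::plus) \<Rightarrow> nat \<Rightarrow> 'a" where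
  "shear_adjoint m x = (\<lambda>i. if 2*m < i \<and> i \<le> 3*m then x i + x (i - 2*m) else x i)"

lemma concat3_add_third_to_first: "concat3 m (\<lambda>i. u i + w i) v w = shear m (concat3 m u v w)"
  by (simp add: concat3_def shear_def fun_eq_iff)

lemma inj_shear: "inj (shear m :: (nat \<Rightarrow> 'a::ab_group_add) \<Rightarrow> _)"
proof (rule injI)
  fix u v :: "nat \<Rightarrow> 'a" assume eq: "shear m u = shear m v"
  have high: "u (i + 2*m) = v (i + 2*m)" if "1 \<le> i" for i
    using fun_cong[OF eq, of "i + 2*m"] that by (simp add: shear_def)
  show "u = v"
  proof
    fix i show "u i = v i"
      using fun_cong[OF eq, of i] high[of i] by (auto simp: shear_def split: if_splits)
  qed
qed

lemma dot_shear: "dot {1..3*m} x (shear m v) = dot {1..3*m} (shear_adjoint m x) v"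
proof -
  let ?cross = "\<Sum>i\<in>{1..m}. x i * v (i + 2*m)"
  have "dot {1..3*m} x (shear m v) =
      dot {1..3*m} x v + (\<Sum>i\<in>{1..3*m}. if i \<le> m then x i * v (i + 2*m) else 0)"
    unfolding dot_def shear_def sum.distrib[symmetric] by (intro sum.cong) (auto simp: algebra_simps)
  also have "(\<Sum>i\<in>{1..3*m}. if i \<le> m then x i * v (i + 2*m) else 0) = ?cross"
    by (intro sum.mono_neutral_cong_right) auto
  also have "?cross = (\<Sum>i\<in>{1 + 2*m..m + 2*m}. x (i - 2*m) * v i)"
    by (subst sum.shift_bounds_cl_nat_ivl) simp
  also have "\<dots> = (\<Sum>i\<in>{1..3*m}. if 2*m < i then x (i - 2*m) * v i else 0)"
    by (intro sum.mono_neutral_cong_left) auto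
  also have "dot {1..3*m} x v + \<dots> = dot {1..3*m} (shear_adjoint m x) v"
    unfolding dot_def shear_adjoint_def sum.distrib[symmetric] by (intro sum.cong) (auto simp: algebra_simps)
  finally show ?thesis .
qed

lemma mem_concat_supp_cases:
  assumes P: "P3 \<subseteq> P1" "P1 \<subseteq> {1..m}" "P2 \<subseteq> {1..m}" and j: "j \<in> concat_supp m P1 P2 P3"
  shows "j \<le> 2*m \<or> (\<exists>i\<in>{1..m}. i \<in> concat_supp m P1 P2 P3 \<and> j = i + 2*m)"
proof (cases "2*m < j \<and> j - 2*m \<in> P3")
  case True
  then have "j - 2*m \<in> concat_supp m P1 P2 P3" "j - 2*m \<in> {1..m}"
    using P by (auto simp: concat_supp_def)
  with True show ?thesis by auto
next
  case False
  have "P3 \<subseteq> {1..m}" using P by blast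
  with False show ?thesis using P j by (fastforce simp: mem_concat_supp_iff)
qed

text \<open>Shearing only adds the first block of \<open>x\<close> to its third block, so nothing changes on
  a support whose third block lies inside its first.\<close>

lemma shear_adjoint_vanishing_iff:
  fixes x :: "nat \<Rightarrow> 'a::monoid_add"
  assumes P: "P3 \<subseteq> P1" "P1 \<subseteq> {1..m}" "P2 \<subseteq> {1..m}"
  shows "(\<forall>j\<in>concat_supp m P1 P2 P3. shear_adjoint m x j = 0) \<longleftrightarrow> (\<forall>j\<in>concat_supp m P1 P2 P3. x j = 0)"
proof -
  let ?Q = "concat_supp m P1 P2 P3"
  have low: "shear_adjoint m x j = x j" if "j \<le> 2*m" for j
    using that by (simp add: shear_adjoint_def)
  have high: "shear_adjoint m x (i + 2*m) = x (i + 2*m) + x i" if "i \<in> {1..m}" for i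
    using that by (simp add: shear_adjoint_def)
  show ?thesis
  proof
    assume y: "\<forall>j\<in>?Q. shear_adjoint m x j = 0"
    show "\<forall>j\<in>?Q. x j = 0"
    proof
      fix j assume j: "j \<in> ?Q"
      with mem_concat_supp_cases[OF P] consider "j \<le> 2*m" | i where "i \<in> {1..m}" "i \<in> ?Q" "j = i + 2*m"
        by blast
      then show "x j = 0"
      proof cases
        case 1
        then show ?thesis using y low j by metis
      next
        case (2 i)
        then have "x i = 0" using y low[of i] by auto
        then show ?thesis using y high[of i] 2 j by auto
      qed
    qed
  next
    assume x: "\<forall>j\<in>?Q. x j = 0"
    show "\<forall>j\<in>?Q. shear_adjoint m x j = 0"
    proof
      fix j assume j: "j \<in> ?Q"
      with mem_concat_supp_cases[OF P] consider "j \<le> 2*m" | i where "i \<in> {1..m}" "i \<in> ?Q" "j = i + 2*m"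
        by blast
      then show "shear_adjoint m x j = 0"
        using x low high j by cases auto
    qed
  qed
qed

section \<open>The column set\<close>

definition N1 :: "nat \<Rightarrow> nat set \<Rightarrow> nat set \<Rightarrow> nat set \<Rightarrow> (nat \<Rightarrow> 'a::field) set" where
  "N1 m A B C = (\<lambda>(w2, w3, w1). concat3 m w2 w3 w1) ` (Delta m B \<times> Delta m C \<times> Deltac m A)"

lemma N1I: "w1 \<in> Deltac m A \<Longrightarrow> w2 \<in> Delta m B \<Longrightarrow> w3 \<in> Delta m C \<Longrightarrow> concat3 m w2 w3 w1 \<in> N1 m A B C"
  unfolding N1_def by (rule image_eqI[where x = "(w2, w3, w1)"]) simp_all

lemma N1E:
  assumes "v \<in> N1 m A B C"
  obtains w1 w2 w3 where "w1 \<in> Deltac m A" "w2 \<in> Delta m B" "w3 \<in> Delta m C" "v = concat3 m w2 w3 w1"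
  using assms unfolding N1_def by auto

lemma N2I:
  assumes "\<tau> = 0 \<or> \<tau> = 1" "w1 \<in> Deltac m A" "w2 \<in> Delta m B" "w3 \<in> Delta m C"
  shows "concat3 m (\<lambda>i. w2 i + \<tau> * w1 i) w3 w1 \<in> N2 m A B C"
proof -
  have "(\<lambda>i. \<tau> * w1 i) \<in> {\<lambda>_. 0, w1}" using assms(1) by auto
  then show ?thesis
    unfolding N2_def mem_Collect_eq
    by (intro exI[of _ w1] exI[of _ w2] exI[of _ w3] exI[of _ "\<lambda>i. \<tau> * w1 i"]) (use assms in simp)
qed

lemma N2E:
  assumes "c \<in> N2 m A B C"
  obtains w1 w2 w3 \<tau> where "w1 \<in> Deltac m A" "w2 \<in> Delta m B" "w3 \<in> Delta m C"
    "\<tau> = 0 \<or> \<tau> = 1" "c = concat3 m (\<lambda>i. w2 i + \<tau> * w1 i) w3 w1"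
proof -
  obtain w1 w2 w3 \<omega> where w: "w1 \<in> Deltac m A" "w2 \<in> Delta m B" "w3 \<in> Delta m C"
    and c: "c = concat3 m (\<lambda>i. w2 i + \<omega> i) w3 w1" and "\<omega> \<in> {\<lambda>_. 0, w1}"
    using assms unfolding N2_def mem_Collect_eq by (elim exE conjE) metis
  then have "\<omega> = (\<lambda>i. 0 * w1 i) \<or> \<omega> = (\<lambda>i. 1 * w1 i)" by auto
  with w c that show ?thesis by blast
qed

lemma N2_eq_N1_Un_shear: "(N2 m A B C :: (nat \<Rightarrow> 'a::field) set) = N1 m A B C \<union> shear m ` N1 m A B C"
proof (intro equalityI subsetI)
  fix c :: "nat \<Rightarrow> 'a" assume "c \<in> N2 m A B C"
  then obtain w1 w2 w3 \<tau> where w: "w1 \<in> Deltac m A" "w2 \<in> Delta m B" "w3 \<in> Delta m C"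
    and "\<tau> = 0 \<or> \<tau> = 1" and c: "c = concat3 m (\<lambda>i. w2 i + \<tau> * w1 i) w3 w1"
    by (rule N2E)
  then have "c = concat3 m w2 w3 w1 \<or> c = shear m (concat3 m w2 w3 w1)"
    by (auto simp: concat3_add_third_to_first)
  then show "c \<in> N1 m A B C \<union> shear m ` N1 m A B C"
    using N1I[OF w] by blast
next
  fix c :: "nat \<Rightarrow> 'a" assume "c \<in> N1 m A B C \<union> shear m ` N1 m A B C"
  then obtain w1 w2 w3 where w: "w1 \<in> Deltac m A" "w2 \<in> Delta m B" "w3 \<in> Delta m C"
    and "c = concat3 m w2 w3 w1 \<or> c = shear m (concat3 m w2 w3 w1)"
    by (auto elim: N1E)
  then have "c = concat3 m (\<lambda>i. w2 i + 0 * w1 i) w3 w1 \<or> c = concat3 m (\<lambda>i. w2 i + 1 * w1 i) w3 w1"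
    by (auto simp: concat3_add_third_to_first)
  then show "c \<in> N2 m A B C"
    using N2I[OF _ w] by metis
qed

lemma N1_eq_supported_diff:
  assumes "A \<subseteq> {1..m}" "B \<subseteq> {1..m}" "C \<subseteq> {1..m}"
  shows "N1 m A B C = supported (concat_supp m B C {1..m}) - supported (concat_supp m B C A)"
proof -
  let ?f = "\<lambda>(u, v, w). concat3 m u v w :: nat \<Rightarrow> 'a"
  have Delta_Fvec: "Delta m P \<subseteq> Fvec m" for P :: "nat set"
    unfolding Delta_def by blast
  have "N1 m A B C = ?f ` (Delta m B \<times> Delta m C \<times> Deltac m A)"
    unfolding N1_def ..
  also have "Delta m B \<times> Delta m C \<times> Deltac m A =
      (Delta m B \<times> Delta m C \<times> Fvec m) - (Delta m B \<times> Delta m C \<times> Delta m A)"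
    by (auto simp: Deltac_def)
  also have "?f ` \<dots> = ?f ` (Delta m B \<times> Delta m C \<times> Fvec m) - ?f ` (Delta m B \<times> Delta m C \<times> Delta m A)"
    by (rule inj_on_image_set_diff[OF inj_on_concat3]) (use Delta_Fvec in blast)+
  also have "\<dots> = supported (concat_supp m B C {1..m}) - supported (concat_supp m B C A)"
    by (simp only: supported_concat_supp[OF assms(2,3) subset_refl, unfolded Delta_full]
        supported_concat_supp[OF assms(2,3,1)])
  finally show ?thesis .
qed

text \<open>At a coordinate \<open>k \<notin> A\<close> where the third block \<open>w\<^sub>1\<close> is nonzero, the first block of a
  vector of \<open>N1\<close> vanishes (as \<open>B \<subseteq> A\<close>), whereas that of a sheared vector is \<open>w\<^sub>1 k\<close>.\<close>

lemma N1_disjoint_shear: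
  assumes "B \<subseteq> A"
  shows "N1 m A B C \<inter> shear m ` N1 m A B C = {}"
proof -
  have False if "concat3 m w2' w3' w1' = shear m (concat3 m w2 w3 w1)"
    and w: "w1 \<in> Deltac m A" "w2 \<in> Delta m B" "w2' \<in> Delta m B" for w1 w2 w3 w1' w2' w3' :: "nat \<Rightarrow> 'a"
  proof -
    obtain k where k: "k \<in> {1..m}" "k \<notin> A" "w1 k \<noteq> 0" using w(1) by (rule Deltac_nonzero_outside)
    have "concat3 m w2' w3' w1' = (\<lambda>j. 1 * concat3 m (\<lambda>i. w2 i + w1 i) w3 w1 j)"
      using that(1) by (simp add: concat3_add_third_to_first)
    then have "w2' k = w2 k + w1 k" using k(1) by (simp only: concat3_eq_smult_iff) simp
    moreover have "w2 k = 0" "w2' k = 0" using w k(2) assms by (auto intro: Delta_vanishing)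
    ultimately show False using k(3) by simp
  qed
  then show ?thesis by (auto elim!: N1E)
qed

lemma finite_N1:
  assumes "A \<subseteq> {1..m}" "B \<subseteq> {1..m}" "C \<subseteq> {1..m}"
  shows "finite (N1 m A B C :: (nat \<Rightarrow> 'a::{finite,field}) set)"
proof -
  have "finite (concat_supp m B C {1..m})"
    using assms by (intro finite_subset[OF concat_supp_subset]) auto
  then show ?thesis
    using assms by (simp add: N1_eq_supported_diff finite_supported)
qed

lemma card_filter_N2:
  fixes R :: "(nat \<Rightarrow> 'a::{finite,field}) \<Rightarrow> bool"
  assumes "A \<subseteq> {1..m}" "B \<subseteq> A" "C \<subseteq> {1..m}"
  shows "card {c \<in> N2 m A B C. R c} = card {v \<in> N1 m A B C. R v} + card {v \<in> N1 m A B C. R (shear m v)}"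
proof -
  have fin: "finite (N1 m A B C :: (nat \<Rightarrow> 'a) set)" using assms by (intro finite_N1) auto
  have "{c \<in> N2 m A B C. R c} = {v \<in> N1 m A B C. R v} \<union> shear m ` {v \<in> N1 m A B C. R (shear m v)}"
    unfolding N2_eq_N1_Un_shear by auto
  moreover have "{v \<in> N1 m A B C. R v} \<inter> shear m ` {v \<in> N1 m A B C. R (shear m v)} = {}"
    using N1_disjoint_shear[OF assms(2), of m C] by blast
  moreover have "card (shear m ` {v \<in> N1 m A B C. R (shear m v)}) = card {v \<in> N1 m A B C. R (shear m v)}"
    by (rule card_image) (meson inj_shear inj_on_subset subset_UNIV)
  ultimately show ?thesis
    using fin by (simp add: card_Un_disjoint)
qed

lemma N2_nonzero: "(\<lambda>_. 0) \<notin> (N2 m A B C :: (nat \<Rightarrow> 'a::field) set)"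
proof
  assume "(\<lambda>_. 0) \<in> (N2 m A B C :: (nat \<Rightarrow> 'a) set)"
  then show False
  proof (rule N2E)
    fix w1 w2 w3 :: "nat \<Rightarrow> 'a" and \<tau>
    assume "w1 \<in> Deltac m A" and eq: "(\<lambda>_. 0) = concat3 m (\<lambda>i. w2 i + \<tau> * w1 i) w3 w1"
    then obtain k where k: "k \<in> {1..m}" "w1 k \<noteq> 0" by (elim Deltac_nonzero_outside)
    have "concat3 m (\<lambda>i. w2 i + \<tau> * w1 i) w3 w1 (k + 2*m) = w1 k"
      using k(1) by (simp add: concat3_def)
    with eq k(2) show False by (metis)
  qed
qed

lemma N2_smult:
  assumes "c \<in> N2 m A B C" "\<alpha> \<noteq> 0"
  shows "(\<lambda>i. \<alpha> * c i) \<in> N2 m A B C"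
proof -
  from assms(1) obtain w1 w2 w3 \<tau> where w: "w1 \<in> Deltac m A" "w2 \<in> Delta m B" "w3 \<in> Delta m C" "\<tau> = 0 \<or> \<tau> = 1"
    and c: "c = concat3 m (\<lambda>i. w2 i + \<tau> * w1 i) w3 w1"
    by (rule N2E)
  have "(\<lambda>i. \<alpha> * c i) = concat3 m (\<lambda>i. \<alpha> * w2 i + \<tau> * (\<alpha> * w1 i)) (\<lambda>i. \<alpha> * w3 i) (\<lambda>i. \<alpha> * w1 i)"
    unfolding c concat3_smult by (simp add: algebra_simps)
  also have "\<dots> \<in> N2 m A B C"
    using w assms(2) by (intro N2I Delta_smult Deltac_smult) simp_all
  finally show ?thesis .
qed

section \<open>Codewords and their weights\<close>

definition codeword :: "nat \<Rightarrow> (nat \<Rightarrow> 'a::field) set \<Rightarrow> (nat \<Rightarrow> 'a) \<Rightarrow> (nat \<Rightarrow> 'a) \<Rightarrow> 'a" where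
  "codeword m Nbar x = (\<lambda>c. if c \<in> Nbar then dot {1..3*m} x c else 0)"

lemma code_eq_image_codeword: "code m Nbar = codeword m Nbar ` Fvec (3*m)"
  unfolding code_def codeword_def dot_def ..

lemma hweight_codeword: "hweight Nbar (codeword m Nbar x) = card {c \<in> Nbar. dot {1..3*m} x c \<noteq> 0}"
  unfolding hweight_def codeword_def by (rule arg_cong[where f = card]) auto

lemma codeword_eq_0_iff: "codeword m Nbar x = (\<lambda>_. 0) \<longleftrightarrow> (\<forall>c\<in>Nbar. dot {1..3*m} x c = 0)"
  unfolding codeword_def by (auto simp: fun_eq_iff)

lemma hweight_codeword_eq_0_iff:
  "finite Nbar \<Longrightarrow> hweight Nbar (codeword m Nbar x) = 0 \<longleftrightarrow> codeword m Nbar x = (\<lambda>_. 0)"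
  unfolding hweight_codeword codeword_eq_0_iff by auto

lemma codeword_diff:
  "codeword m Nbar (\<lambda>k. x k - y k) = (\<lambda>c. codeword m Nbar x c - codeword m Nbar y c)"
  by (simp add: codeword_def dot_def fun_eq_iff left_diff_distrib sum_subtractf)

text \<open>Up to the factor \<open>(q - 1) q\<^bsup>|B|+|C|-1\<^esup>\<close>, \<open>core_weight x\<close> counts the vectors of \<open>N1\<close> on
  which the codeword with coefficient vector \<open>x\<close> is nonzero (\<open>card_N1_dot_nonzero\<close>).\<close>

definition core_weight :: "nat \<Rightarrow> nat set \<Rightarrow> nat set \<Rightarrow> nat set \<Rightarrow> (nat \<Rightarrow> 'a::{finite,zero}) \<Rightarrow> nat" where
  "core_weight m A B C x =
    (if \<exists>j\<in>concat_supp m B C A. x j \<noteq> 0 then CARD('a) ^ m - CARD('a) ^ card A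
     else if \<exists>j\<in>concat_supp m B C {1..m}. x j \<noteq> 0 then CARD('a) ^ m else 0)"

lemma card_N1_dot_nonzero:
  fixes x :: "nat \<Rightarrow> 'a::{finite,field}"
  assumes A: "A \<subseteq> {1..m}" and B: "B \<subseteq> {1..m}" "B \<noteq> {}" and C: "C \<subseteq> {1..m}"
  shows "card {v \<in> N1 m A B C. dot {1..3*m} x v \<noteq> 0} =
    (CARD('a) - 1) * CARD('a) ^ (card B + card C - 1) * core_weight m A B C x"
proof -
  let ?q = "CARD('a)" and ?k = "card B + card C"
  let ?Qs = "concat_supp m B C {1..m}" and ?Qp = "concat_supp m B C A"
  let ?count = "\<lambda>P. card {v \<in> supported P. dot {1..3*m} x v \<noteq> (0::'a)}"
  have Qs: "?Qs \<subseteq> {1..3*m}" "card ?Qs = ?k + m"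
    using B C concat_supp_subset[of B m C "{1..m}"] card_concat_supp[of B m C "{1..m}"] by simp_all
  have Qp: "?Qp \<subseteq> ?Qs" "card ?Qp = ?k + card A"
    using A B C concat_supp_mono[of B B C C A "{1..m}"] card_concat_supp[of B m C A] by simp_all
  have "1 \<le> ?k" using B finite_subset[OF B(1)] by (simp add: Suc_le_eq card_gt_0_iff)
  then have pow: "?q ^ (?k + n - 1) = ?q ^ (?k - 1) * ?q ^ n" for n
    by (simp add: power_add[symmetric])
  have "{v \<in> N1 m A B C. dot {1..3*m} x v \<noteq> 0} =
      {v \<in> supported ?Qs. dot {1..3*m} x v \<noteq> 0} - {v \<in> supported ?Qp. dot {1..3*m} x v \<noteq> 0}"
    using A B C by (auto simp: N1_eq_supported_diff)
  moreover have sub: "{v \<in> supported ?Qp. dot {1..3*m} x v \<noteq> 0} \<subseteq> {v \<in> supported ?Qs. dot {1..3*m} x v \<noteq> 0}"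
    using supported_mono[OF Qp(1)] by blast
  moreover have "finite {v \<in> supported ?Qs. dot {1..3*m} x v \<noteq> 0}"
    using finite_supported[OF finite_subset[OF Qs(1)], where 'a='a] by simp
  ultimately have "card {v \<in> N1 m A B C. dot {1..3*m} x v \<noteq> 0} = ?count ?Qs - ?count ?Qp"
    by (simp add: card_Diff_subset finite_subset)
  also have "\<dots> = (?q - 1) * ?q ^ (?k - 1) * core_weight m A B C x"
    unfolding card_supported_dot_nonzero[OF finite_atLeastAtMost Qs(1)]
      card_supported_dot_nonzero[OF finite_atLeastAtMost order_trans[OF Qp(1) Qs(1)]]
      Qs(2) Qp(2) pow core_weight_def
    using Qp(1) by (auto simp: diff_mult_distrib2 mult.assoc)
  finally show ?thesis .
qed

lemma sum_fun_apply: "(\<Sum>j\<in>I. f j) c = (\<Sum>j\<in>I. f j c)"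
  by (induction I rule: infinite_finite_induct) simp_all

interpretation fun_space: vector_space "\<lambda>(a::'a::field) (f :: (nat \<Rightarrow> 'a) \<Rightarrow> 'a) c. a * f c"
  by unfold_locales (auto simp: fun_eq_iff algebra_simps)

lemma code_dim_eq: "code_dim V = fun_space.dim V"
  unfolding code_dim_def ..

section \<open>The code of a set of representatives of \<open>N2\<close>\<close>

locale N2_code =
  fixes m :: nat and A B C :: "nat set" and Nbar :: "(nat \<Rightarrow> 'a::{finite,field}) set"
  assumes A_psubset: "A \<subset> {1..m}" and B_nonempty: "B \<noteq> {}" and B_subset: "B \<subseteq> A"
    and C_subset: "C \<subseteq> {1..m}" and projective_rep: "is_projective_rep (N2 m A B C) Nbar"
begin

lemma A_subset: "A \<subseteq> {1..m}"
  using A_psubset by blast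

lemma B_subset_atLeastAtMost: "B \<subseteq> {1..m}"
  using A_subset B_subset by blast

lemma card_A_less: "card A < m"
  using psubset_card_mono[OF _ A_psubset] by simp

lemma card_B_C_pos: "1 \<le> card B + card C"
  using B_nonempty finite_subset[OF B_subset_atLeastAtMost] by (simp add: Suc_le_eq card_gt_0_iff)

lemma finite_N2: "finite (N2 m A B C :: (nat \<Rightarrow> 'a) set)"
  unfolding N2_eq_N1_Un_shear
  using finite_N1[OF A_subset B_subset_atLeastAtMost C_subset, where 'a='a] by simp

lemma Nbar_subset: "Nbar \<subseteq> N2 m A B C"
  using projective_rep by (rule projective_rep_subset)

lemma finite_Nbar: "finite Nbar"
  using finite_subset[OF Nbar_subset finite_N2] .

lemma Nbar_nonempty: "Nbar \<noteq> {}"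
proof -
  obtain k where "k \<in> {1..m}" "k \<notin> A" using A_psubset by blast
  then have "concat3 m (\<lambda>i. 0 + 0 * unit_vec k i) (\<lambda>_. 0) (unit_vec k) \<in> (N2 m A B C :: (nat \<Rightarrow> 'a) set)"
    by (intro N2I) (auto simp: Deltac_def Delta_def Fvec_def supp_def unit_vec_def)
  then show ?thesis
    using projective_rep by (auto elim: projective_repE)
qed

lemma Nbar_memE:
  assumes "c \<in> Nbar"
  obtains w1 w2 w3 \<tau> k0 where "w1 \<in> Deltac m A" "w2 \<in> Delta m B" "w3 \<in> Delta m C" "\<tau> = 0 \<or> \<tau> = 1"
    "c = concat3 m (\<lambda>i. w2 i + \<tau> * w1 i) w3 w1" "k0 \<in> {1..m}" "k0 \<notin> A" "w1 k0 \<noteq> 0"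
proof -
  obtain w1 w2 w3 \<tau> where w: "w1 \<in> Deltac m A" "w2 \<in> Delta m B" "w3 \<in> Delta m C" "\<tau> = 0 \<or> \<tau> = 1"
    "c = concat3 m (\<lambda>i. w2 i + \<tau> * w1 i) w3 w1"
    using assms Nbar_subset by (blast elim: N2E)
  moreover obtain k0 where "k0 \<in> {1..m}" "k0 \<notin> A" "w1 k0 \<noteq> 0"
    using w(1) by (rule Deltac_nonzero_outside)
  ultimately show ?thesis by (rule that)
qed

lemma card_N2: "card (N2 m A B C :: (nat \<Rightarrow> 'a) set) =
    2 * (CARD('a) ^ (card B + card C + m) - CARD('a) ^ (card B + card C + card A))"
proof -
  let ?Qs = "concat_supp m B C {1..m}" and ?Qp = "concat_supp m B C A"
  have Qs: "?Qs \<subseteq> {1..3*m}" "card ?Qs = card B + card C + m"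
    using B_subset_atLeastAtMost C_subset concat_supp_subset[of B m C "{1..m}"]
      card_concat_supp[of B m C "{1..m}"] by simp_all
  have Qp: "?Qp \<subseteq> ?Qs" "card ?Qp = card B + card C + card A"
    using A_subset B_subset_atLeastAtMost C_subset concat_supp_mono[of B B C C A "{1..m}"]
      card_concat_supp[of B m C A] by simp_all
  have "card (N1 m A B C :: (nat \<Rightarrow> 'a) set) = card (supported ?Qs :: (nat \<Rightarrow> 'a) set) - card (supported ?Qp :: (nat \<Rightarrow> 'a) set)"
    using A_subset B_subset_atLeastAtMost C_subset supported_mono[OF Qp(1), where 'a='a]
      finite_supported[OF finite_subset[OF order_trans[OF Qp(1) Qs(1)]], where 'a='a]
    by (simp add: N1_eq_supported_diff card_Diff_subset)
  also have "\<dots> = CARD('a) ^ (card B + card C + m) - CARD('a) ^ (card B + card C + card A)"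
    using Qs Qp finite_subset[OF Qs(1)] finite_subset[OF order_trans[OF Qp(1) Qs(1)]]
    by (simp add: card_supported)
  finally show ?thesis
    using card_filter_N2[OF A_subset B_subset C_subset, of "\<lambda>_::nat \<Rightarrow> 'a. True"] by simp
qed

lemma card_Nbar: "(CARD('a) - 1) * card Nbar =
    2 * (CARD('a) ^ (card B + card C + m) - CARD('a) ^ (card B + card C + card A))"
  using card_filter_projective_rep[OF projective_rep N2_nonzero N2_smult, of "\<lambda>_. True"] card_N2
  by simp

lemma card_Nbar_real:
  "real (card Nbar) =
    2 * real CARD('a) ^ (card B + card C) * (real CARD('a) ^ m - real CARD('a) ^ card A) / (real CARD('a) - 1)"
proof -
  let ?q = "CARD('a)" and ?k = "card B + card C"
  have q: "2 \<le> ?q" by (rule two_le_card_field)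
  have "?q ^ (?k + card A) \<le> ?q ^ (?k + m)"
    using card_A_less q by (intro power_increasing) auto
  then have "(real ?q - 1) * real (card Nbar) = 2 * (real ?q ^ (?k + m) - real ?q ^ (?k + card A))"
    using arg_cong[OF card_Nbar, of real] q by simp
  also have "\<dots> = 2 * real ?q ^ ?k * (real ?q ^ m - real ?q ^ card A)"
    by (simp add: power_add algebra_simps)
  finally show ?thesis
    using q by (simp add: field_simps)
qed

lemma card_A_if_one_outside: "card ({1..m} - A) = 1 \<Longrightarrow> card A + 1 = m"
  using card_Diff_subset[OF finite_subset[OF A_subset] A_subset] card_A_less by simp

lemma binary_card_Nbar:
  assumes "CARD('a) = 2" "card ({1..m} - A) = 1"
  shows "card Nbar = 2 ^ (m + card B + card C)"
proof -
  have "card A + 1 = m" using assms(2) by (rule card_A_if_one_outside)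
  then have "2 * (2 ^ (card B + card C + m) - 2 ^ (card B + card C + card A)) = (2::nat) ^ (m + card B + card C)"
    by (auto simp: power_add algebra_simps)
  then show ?thesis using card_Nbar assms(1) by simp
qed

lemma hweight_codeword_eq:
  "hweight Nbar (codeword m Nbar x) =
    CARD('a) ^ (card B + card C - 1) * (core_weight m A B C x + core_weight m A B C (shear_adjoint m x))"
proof -
  let ?q = "CARD('a)"
  have "(?q - 1) * card {c \<in> Nbar. dot {1..3*m} x c \<noteq> 0} = card {c \<in> N2 m A B C. dot {1..3*m} x c \<noteq> 0}"
    by (rule card_filter_projective_rep[OF projective_rep N2_nonzero N2_smult, symmetric])
      (simp_all add: dot_smult_right)
  also have "\<dots> = card {v \<in> N1 m A B C. dot {1..3*m} x v \<noteq> 0} +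
      card {v \<in> N1 m A B C. dot {1..3*m} (shear_adjoint m x) v \<noteq> 0}"
    unfolding card_filter_N2[OF A_subset B_subset C_subset] dot_shear ..
  also have "\<dots> = (?q - 1) * (?q ^ (card B + card C - 1) * (core_weight m A B C x + core_weight m A B C (shear_adjoint m x)))"
    unfolding card_N1_dot_nonzero[OF A_subset B_subset_atLeastAtMost B_nonempty C_subset]
    by (simp add: algebra_simps)
  finally show ?thesis
    unfolding hweight_codeword using two_le_card_field[where 'a='a] by simp
qed

lemma power_card_A_less: "CARD('a) ^ card A < CARD('a) ^ m"
  using card_A_less two_le_card_field[where 'a='a] by (intro power_strict_increasing) auto

lemma twice_power_card_A_le: "2 * CARD('a) ^ card A \<le> CARD('a) ^ m"
proof -
  have "2 * CARD('a) ^ card A \<le> CARD('a) ^ Suc (card A)"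
    using two_le_card_field[where 'a='a] by simp
  also have "\<dots> \<le> CARD('a) ^ m"
    using card_A_less two_le_card_field[where 'a='a] by (intro power_increasing) auto
  finally show ?thesis .
qed

lemma core_weight_eq_0_iff:
  "core_weight m A B C x = 0 \<longleftrightarrow> (\<forall>j\<in>concat_supp m B C {1..m}. (x j :: 'a) = 0)"
  using power_card_A_less concat_supp_mono[OF order_refl order_refl A_subset, of m B C]
  by (auto simp: core_weight_def)

lemma core_weight_ge: "core_weight m A B C (x :: nat \<Rightarrow> 'a) \<noteq> 0 \<Longrightarrow>
    CARD('a) ^ m - CARD('a) ^ card A \<le> core_weight m A B C x"
  by (auto simp: core_weight_def split: if_splits)

lemma core_weight_if_vanishing:
  "\<forall>j\<in>concat_supp m B C A. (x j :: 'a) = 0 \<Longrightarrow> core_weight m A B C x \<noteq> 0 \<Longrightarrow>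
    core_weight m A B C x = CARD('a) ^ m"
  by (auto simp: core_weight_def split: if_splits)

text \<open>If one of \<open>x\<close> and its shear has core weight \<open>0\<close>, it vanishes on the support of \<open>N1\<close>; for
  \<open>B = A\<close> the shear preserves vanishing on the smaller support \<open>concat_supp m B C A\<close>, so the
  other one has the full core weight \<open>q\<^sup>m\<close>.\<close>

lemma core_weight_sum_ge:
  fixes x :: "nat \<Rightarrow> 'a"
  assumes nonzero: "core_weight m A B C x + core_weight m A B C (shear_adjoint m x) \<noteq> 0"
  shows "CARD('a) ^ m - (if B = A then 0 else 1) * CARD('a) ^ card A \<le>
    core_weight m A B C x + core_weight m A B C (shear_adjoint m x)"
proof -
  let ?q = "CARD('a)" and ?s = "core_weight m A B C" and ?y = "shear_adjoint m x"
  let ?Qs = "concat_supp m B C {1..m}" and ?Qp = "concat_supp m B C A"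
  have Qp_Qs: "?Qp \<subseteq> ?Qs" using concat_supp_mono[OF order_refl order_refl A_subset] .
  show ?thesis
  proof (cases "?s x \<noteq> 0 \<and> ?s ?y \<noteq> 0")
    case True
    then show ?thesis
      using core_weight_ge[of x] core_weight_ge[of ?y] twice_power_card_A_le by linarith
  next
    case False
    show ?thesis
    proof (cases "B = A")
      case True
      then have "A \<subseteq> B" by simp
      then have "\<forall>j\<in>?Qp. x j = 0" "\<forall>j\<in>?Qp. ?y j = 0"
        using False Qp_Qs core_weight_eq_0_iff[of x] core_weight_eq_0_iff[of ?y]
          shear_adjoint_vanishing_iff[OF _ B_subset_atLeastAtMost C_subset, of A x]
        by blast+
      then show ?thesis
        using nonzero False core_weight_if_vanishing[of x] core_weight_if_vanishing[of ?y] by auto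
    next
      case False
      then show ?thesis
        using nonzero core_weight_ge[of x] core_weight_ge[of ?y] by auto
    qed
  qed
qed

lemma min_weight_le_hweight:
  assumes f: "f \<in> code m Nbar" "f \<noteq> (\<lambda>_. 0)"
  shows "(CARD('a) ^ m - (if B = A then 0 else 1) * CARD('a) ^ card A) * CARD('a) ^ (card B + card C - 1)
    \<le> hweight Nbar f"
proof -
  let ?s = "core_weight m A B C"
  obtain x where x: "f = codeword m Nbar x" using f(1) unfolding code_eq_image_codeword by blast
  then have "hweight Nbar f \<noteq> 0" using f(2) hweight_codeword_eq_0_iff[OF finite_Nbar] by blast
  then have "?s x + ?s (shear_adjoint m x) \<noteq> 0" unfolding x hweight_codeword_eq by simp
  then have "CARD('a) ^ m - (if B = A then 0 else 1) * CARD('a) ^ card A \<le> ?s x + ?s (shear_adjoint m x)"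
    by (rule core_weight_sum_ge)
  then show ?thesis
    unfolding x hweight_codeword_eq by (metis mult.commute mult_le_mono1)
qed

lemma core_weight_unit_vec:
  "j0 \<in> {1..m} \<Longrightarrow> j0 \<notin> B \<Longrightarrow> core_weight m A B C (unit_vec j0 :: nat \<Rightarrow> 'a) = 0"
  using B_subset_atLeastAtMost C_subset
  by (auto simp: core_weight_eq_0_iff unit_vec_def mem_concat_supp_iff)

lemma core_weight_shear_adjoint_unit_vec:
  assumes j0: "j0 \<in> {1..m}" "j0 \<notin> B"
  shows "core_weight m A B C (shear_adjoint m (unit_vec j0 :: nat \<Rightarrow> 'a)) =
    CARD('a) ^ m - (if j0 \<in> A then CARD('a) ^ card A else 0)"
proof -
  let ?x = "unit_vec j0 :: nat \<Rightarrow> 'a"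
  let ?Qs = "concat_supp m B C {1..m}" and ?Qp = "concat_supp m B C A"
  have "j0 \<notin> ?Qs"
    using j0 B_subset_atLeastAtMost C_subset by (auto simp: mem_concat_supp_iff)
  then have "shear_adjoint m ?x j = (if 2*m < j \<and> j \<le> 3*m \<and> j - 2*m = j0 then 1 else 0)"
    if "j \<in> ?Qs" for j
    using that by (auto simp: shear_adjoint_def unit_vec_def)
  moreover have "2*m < j \<and> j \<le> 3*m \<and> j - 2*m = j0 \<longleftrightarrow> j = j0 + 2*m" for j
    using j0(1) by auto
  ultimately have "shear_adjoint m ?x j \<noteq> 0 \<longleftrightarrow> j = j0 + 2*m" if "j \<in> ?Qs" for j
    using that by simp
  moreover have "j0 + 2*m \<in> ?Qs" "j0 + 2*m \<in> ?Qp \<longleftrightarrow> j0 \<in> A"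
    using j0 A_subset B_subset_atLeastAtMost C_subset by (auto simp: mem_concat_supp_iff)
  moreover have "?Qp \<subseteq> ?Qs" using concat_supp_mono[OF order_refl order_refl A_subset] .
  ultimately show ?thesis
    unfolding core_weight_def by auto
qed

lemma min_dist_code:
  "min_dist Nbar (code m Nbar)
    ((CARD('a) ^ m - (if B = A then 0 else 1) * CARD('a) ^ card A) * CARD('a) ^ (card B + card C - 1))"
proof -
  let ?q = "CARD('a)"
  let ?d = "(?q ^ m - (if B = A then 0 else 1) * ?q ^ card A) * ?q ^ (card B + card C - 1)"
  obtain j0 where j0: "j0 \<in> {1..m}" "j0 \<notin> B" "j0 \<in> A \<longleftrightarrow> B \<noteq> A"
  proof (cases "B = A")
    case True
    then show ?thesis using A_psubset that by blast
  next
    case False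
    then show ?thesis using A_subset B_subset that by blast
  qed
  let ?f = "codeword m Nbar (unit_vec j0)"
  have "(if j0 \<in> A then ?q ^ card A else 0) = (if B = A then 0 else 1) * ?q ^ card A"
    using j0(3) by simp
  then have weight: "hweight Nbar ?f = ?d"
    using j0 by (simp add: hweight_codeword_eq core_weight_unit_vec core_weight_shear_adjoint_unit_vec
        mult.commute)
  moreover have "?d \<noteq> 0"
    using power_card_A_less two_le_card_field[where 'a='a] by auto
  ultimately have "?f \<noteq> (\<lambda>_. 0)"
    using hweight_codeword_eq_0_iff[OF finite_Nbar] by metis
  moreover have "?f \<in> code m Nbar"
    using j0(1) by (auto simp: code_eq_image_codeword Fvec_def unit_vec_def)
  ultimately show ?thesis
    unfolding min_dist_def using weight min_weight_le_hweight by blast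
qed

lemma binary_min_dist:
  assumes "CARD('a) = 2" "card ({1..m} - A) = 1"
  shows "min_dist Nbar (code m Nbar) ((2 - (if B = A then 0 else 1)) * 2 ^ (m + card B + card C - 2))"
proof -
  have a: "m = Suc (card A)" using card_A_if_one_outside[OF assms(2)] by simp
  obtain k where k: "card B + card C = Suc k"
    using card_B_C_pos by (cases "card B + card C") auto
  have "(2 ^ m - \<rho> * 2 ^ card A) * 2 ^ (card B + card C - 1) = (2 - \<rho>) * (2::nat) ^ (m + card B + card C - 2)"
    for \<rho> :: nat
  proof -
    have "(2 ^ m - \<rho> * 2 ^ card A) * 2 ^ (card B + card C - 1) = (2 * 2 ^ card A - \<rho> * 2 ^ card A) * (2::nat) ^ k"
      using a k by simp
    also have "\<dots> = (2 - \<rho>) * 2 ^ (card A + k)"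
      by (simp add: power_add diff_mult_distrib)
    also have "card A + k = m + card B + card C - 2"
      using a k by simp
    finally show ?thesis .
  qed
  then show ?thesis using min_dist_code assms(1) by simp
qed

lemma N2_subset_supported: "(N2 m A B C :: (nat \<Rightarrow> 'a) set) \<subseteq> supported (concat_supp m {1..m} C {1..m})"
proof
  fix c :: "nat \<Rightarrow> 'a" assume "c \<in> N2 m A B C"
  then obtain w1 w2 w3 \<tau> where w: "w1 \<in> Deltac m A" "w2 \<in> Delta m B" "w3 \<in> Delta m C"
    and c: "c = concat3 m (\<lambda>i. w2 i + \<tau> * w1 i) w3 w1"
    by (rule N2E)
  have "(\<lambda>i. w2 i + \<tau> * w1 i) \<in> Fvec m" "w1 \<in> Fvec m"
    using w by (auto simp: Deltac_def Delta_def Fvec_def)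
  with w(3) show "c \<in> supported (concat_supp m {1..m} C {1..m})"
    unfolding c supported_concat_supp[OF subset_refl C_subset subset_refl, unfolded Delta_full]
    by (intro image_eqI[where x = "(\<lambda>i. w2 i + \<tau> * w1 i, w3, w1)"]) simp_all
qed

text \<open>Both \<open>x\<close> and its shear vanish on \<open>concat_supp m B C {1..m}\<close>; at a coordinate \<open>j \<le> m\<close>,
  \<open>x j\<close> is the difference of the two at \<open>j + 2m\<close>.\<close>

lemma codeword_eq_0_imp:
  assumes "codeword m Nbar x = (\<lambda>_. 0)"
  shows "\<forall>j\<in>concat_supp m {1..m} C {1..m}. x j = 0"
proof
  let ?Qs = "concat_supp m B C {1..m}"
  fix j assume j: "j \<in> concat_supp m {1..m} C {1..m}"
  have "hweight Nbar (codeword m Nbar x) = 0"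
    using assms hweight_codeword_eq_0_iff[OF finite_Nbar] by blast
  then have "core_weight m A B C x = 0" "core_weight m A B C (shear_adjoint m x) = 0"
    unfolding hweight_codeword_eq using two_le_card_field[where 'a='a] by simp_all
  then have x: "\<forall>i\<in>?Qs. x i = 0" and y: "\<forall>i\<in>?Qs. shear_adjoint m x i = 0"
    unfolding core_weight_eq_0_iff by blast+
  show "x j = 0"
  proof (cases "j \<le> m")
    case True
    then have "j + 2*m \<in> ?Qs" "1 \<le> j"
      using j B_subset_atLeastAtMost C_subset by (auto simp: mem_concat_supp_iff)
    then show ?thesis
      using x y True by (auto simp: shear_adjoint_def)
  next
    case False
    then have "j \<in> ?Qs"
      using j B_subset_atLeastAtMost C_subset by (auto simp: mem_concat_supp_iff)
    then show ?thesis using x by blast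
  qed
qed

lemma codeword_eq_sum_unit_vec:
  "codeword m Nbar x = (\<Sum>j\<in>concat_supp m {1..m} C {1..m}. (\<lambda>c. x j * codeword m Nbar (unit_vec j) c))"
proof
  let ?I = "concat_supp m {1..m} C {1..m}"
  have I: "?I \<subseteq> {1..3*m}" using concat_supp_subset[OF subset_refl C_subset subset_refl] .
  fix c
  show "codeword m Nbar x c = (\<Sum>j\<in>?I. (\<lambda>c. x j * codeword m Nbar (unit_vec j) c)) c"
  proof (cases "c \<in> Nbar")
    case True
    then have c: "c \<in> supported ?I" using Nbar_subset N2_subset_supported by blast
    have "dot {1..3*m} x c = (\<Sum>j\<in>?I. x j * c j)"
      unfolding dot_def using I c by (intro sum.mono_neutral_right) (auto simp: supported_def)
    also have "\<dots> = (\<Sum>j\<in>?I. x j * dot {1..3*m} (unit_vec j) c)"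
      using I by (intro sum.cong) (auto simp: dot_unit_vec)
    finally show ?thesis
      using True by (simp add: sum_fun_apply codeword_def)
  qed (simp add: sum_fun_apply codeword_def)
qed

lemma inj_on_codeword_unit_vec:
  "inj_on (\<lambda>j. codeword m Nbar (unit_vec j)) (concat_supp m {1..m} C {1..m})"
proof (rule inj_onI)
  fix i j assume i: "i \<in> concat_supp m {1..m} C {1..m}"
    and eq: "codeword m Nbar (unit_vec i) = codeword m Nbar (unit_vec j)"
  have "codeword m Nbar (\<lambda>k. unit_vec i k - unit_vec j k) = (\<lambda>_. 0)"
    unfolding codeword_diff eq by simp
  then have "unit_vec i i - unit_vec j i = (0::'a)" using codeword_eq_0_imp i by blast
  then show "i = j" by (auto simp: unit_vec_def split: if_splits)
qed

lemma code_subset_span: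
  "code m Nbar \<subseteq> fun_space.span ((\<lambda>j. codeword m Nbar (unit_vec j)) ` concat_supp m {1..m} C {1..m})"
proof
  fix f assume "f \<in> code m Nbar"
  then obtain x where f: "f = codeword m Nbar x" unfolding code_eq_image_codeword by blast
  have "(\<lambda>c. x j * codeword m Nbar (unit_vec j) c)
      \<in> fun_space.span ((\<lambda>j. codeword m Nbar (unit_vec j)) ` concat_supp m {1..m} C {1..m})"
    if "j \<in> concat_supp m {1..m} C {1..m}" for j
    using that by (intro fun_space.span_scale fun_space.span_base imageI)
  then show "f \<in> fun_space.span ((\<lambda>j. codeword m Nbar (unit_vec j)) ` concat_supp m {1..m} C {1..m})"
    unfolding f codeword_eq_sum_unit_vec[of x] by (rule fun_space.span_sum)
qed

lemma independent_codeword_unit_vec: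
  "fun_space.independent ((\<lambda>j. codeword m Nbar (unit_vec j)) ` concat_supp m {1..m} C {1..m})"
proof -
  let ?I = "concat_supp m {1..m} C {1..m}"
  let ?basis = "(\<lambda>j. codeword m Nbar (unit_vec j)) ` ?I"
  have "\<forall>b\<in>?basis. u b = 0" if sum: "(\<Sum>b\<in>?basis. (\<lambda>c. u b * b c)) = 0" for u
  proof -
    let ?x = "\<lambda>j. u (codeword m Nbar (unit_vec j))"
    have "codeword m Nbar ?x = (\<Sum>b\<in>?basis. (\<lambda>c. u b * b c))"
      unfolding codeword_eq_sum_unit_vec[of ?x] sum.reindex[OF inj_on_codeword_unit_vec]
      by (simp add: comp_def)
    then have "codeword m Nbar ?x = (\<lambda>_. 0)" using sum by (simp only: zero_fun_def)
    then have "\<forall>j\<in>?I. ?x j = 0" by (rule codeword_eq_0_imp)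
    then show ?thesis by blast
  qed
  moreover have "finite ?basis"
    using finite_subset[OF concat_supp_subset[OF subset_refl C_subset subset_refl]] by simp
  ultimately show ?thesis
    by (intro fun_space.independent_if_scalars_zero) blast+
qed

lemma code_dim: "code_dim (code m Nbar) = 2*m + card C"
  unfolding code_dim_eq
proof (rule fun_space.dim_unique[OF _ code_subset_span independent_codeword_unit_vec])
  show "(\<lambda>j. codeword m Nbar (unit_vec j)) ` concat_supp m {1..m} C {1..m} \<subseteq> code m Nbar"
    using concat_supp_subset[OF subset_refl C_subset subset_refl]
    by (auto simp: code_eq_image_codeword Fvec_def unit_vec_def)
  show "card ((\<lambda>j. codeword m Nbar (unit_vec j)) ` concat_supp m {1..m} C {1..m}) = 2*m + card C"
    using card_image[OF inj_on_codeword_unit_vec] card_concat_supp[OF subset_refl C_subset subset_refl]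
    by simp
qed

lemma not_locality_le_1_Nbar: "\<not> locality_le Nbar 1"
  using not_locality_le_1[OF projective_rep N2_nonzero Nbar_nonempty] .

text \<open>For \<open>q \<ge> 3\<close> pick \<open>\<lambda> \<notin> {0, 1}\<close> and split the third block as \<open>\<lambda> w\<^sub>1 + (1 - \<lambda>) w\<^sub>1\<close>;
  the first block is split with the help of some \<open>b \<in> \<Delta>\<^sub>B\<close> chosen so that neither summand is
  proportional to the column.\<close>

lemma locality_le_2_if_card_ge_3:
  assumes q: "3 \<le> CARD('a)"
  shows "locality_le Nbar 2"
proof (rule locality_le_if_nonproportional_sums[OF projective_rep])
  fix c assume "c \<in> Nbar"
  then obtain w1 w2 w3 \<tau> k0 where w: "w1 \<in> Deltac m A" "w2 \<in> Delta m B" "w3 \<in> Delta m C" "\<tau> = 0 \<or> \<tau> = 1"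
    and c_eq: "c = concat3 m (\<lambda>i. w2 i + \<tau> * w1 i) w3 w1" and k0: "k0 \<in> {1..m}" "w1 k0 \<noteq> 0"
    by (elim Nbar_memE)
  have "\<not> UNIV \<subseteq> {0::'a, 1}"
    using q card_mono[of "{0::'a, 1}" UNIV] by (auto simp: card_insert_if)
  then obtain l :: 'a where l: "l \<noteq> 0" "l \<noteq> 1" by blast
  obtain b where b: "b \<in> Delta m B" "b \<noteq> (\<lambda>i. (l - 1) * w2 i)"
    using B_nonempty B_subset_atLeastAtMost by (rule Delta_avoid)
  define Y0 where "Y0 = concat3 m (\<lambda>i. (w2 i + b i) + \<tau> * (l * w1 i)) w3 (\<lambda>i. l * w1 i)"
  define Y1 where "Y1 = concat3 m (\<lambda>i. - b i + \<tau> * ((1 - l) * w1 i)) (\<lambda>_. 0) (\<lambda>i. (1 - l) * w1 i)"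
  have Y: "Y0 \<in> N2 m A B C" "Y1 \<in> N2 m A B C"
    unfolding Y0_def Y1_def
    by (intro N2I Delta_add Delta_uminus Deltac_smult zero_in_Delta; use w b l in simp)+
  have sum: "c = (\<lambda>j. \<Sum>y\<leftarrow>[Y0, Y1]. y j)"
    by (simp add: c_eq Y0_def Y1_def concat3_def fun_eq_iff algebra_simps)
  have b_eq: "b = (\<lambda>i. (l - 1) * w2 i)" if "\<forall>i\<in>{1..m}. b i = (l - 1) * w2 i"
    using that b(1) w(2) by (intro Fvec_eqI) (auto simp: Delta_def Fvec_def)
  have nm0: "Y0 \<noteq> (\<lambda>j. \<mu> * c j)" for \<mu>
  proof
    assume "Y0 = (\<lambda>j. \<mu> * c j)"
    then have eq: "\<forall>i\<in>{1..m}. w2 i + b i + \<tau> * (l * w1 i) = \<mu> * (w2 i + \<tau> * w1 i) \<and> l * w1 i = \<mu> * w1 i"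
      unfolding Y0_def c_eq concat3_eq_smult_iff by blast
    then have "\<mu> = l" using k0 by auto
    with eq have "\<forall>i\<in>{1..m}. b i = (l - 1) * w2 i" by (auto simp: algebra_simps)
    with b(2) b_eq show False by blast
  qed
  have nm1: "Y1 \<noteq> (\<lambda>j. \<mu> * c j)" for \<mu>
  proof
    assume "Y1 = (\<lambda>j. \<mu> * c j)"
    then have eq: "\<forall>i\<in>{1..m}. - b i + \<tau> * ((1 - l) * w1 i) = \<mu> * (w2 i + \<tau> * w1 i) \<and> (1 - l) * w1 i = \<mu> * w1 i"
      unfolding Y1_def c_eq concat3_eq_smult_iff by blast
    then have "\<mu> = 1 - l" using k0 by auto
    with eq have "\<forall>i\<in>{1..m}. b i = (l - 1) * w2 i" by (auto simp: algebra_simps)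
    with b(2) b_eq show False by blast
  qed
  show "\<exists>Ys. length Ys \<le> 2 \<and> is_nonproportional_sum (N2 m A B C) c Ys"
    unfolding is_nonproportional_sum_def using Y sum nm0 nm1 by (intro exI[of _ "[Y0, Y1]"]) simp
qed

text \<open>With a second coordinate \<open>k \<notin> A\<close> besides a coordinate \<open>k\<^sub>0 \<notin> A\<close> where \<open>w\<^sub>1\<close> is
  nonzero, split off the unit vector \<open>e\<^sub>k\<close> from the third block.\<close>

lemma locality_le_2_if_two_outside:
  assumes two: "2 \<le> card ({1..m} - A)"
  shows "locality_le Nbar 2"
proof (rule locality_le_if_nonproportional_sums[OF projective_rep])
  fix c assume "c \<in> Nbar"
  then obtain w1 w2 w3 \<tau> k0 where w: "w1 \<in> Deltac m A" "w2 \<in> Delta m B" "w3 \<in> Delta m C" "\<tau> = 0 \<or> \<tau> = 1"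
    and c_eq: "c = concat3 m (\<lambda>i. w2 i + \<tau> * w1 i) w3 w1" and k0: "k0 \<in> {1..m}" "k0 \<notin> A" "w1 k0 \<noteq> 0"
    by (elim Nbar_memE)
  have "\<not> {1..m} - A \<subseteq> {k0}"
    using two card_mono[of "{k0}" "{1..m} - A"] by auto
  then obtain k where k: "k \<in> {1..m}" "k \<notin> A" "k \<noteq> k0" by blast
  let ?e = "unit_vec k :: nat \<Rightarrow> 'a"
  have "(\<lambda>i. w1 i - ?e i) \<in> Deltac m A" "?e \<in> Deltac m A"
    using w(1) k k0 by (auto simp: Deltac_def Delta_def Fvec_def supp_def unit_vec_def)
  define Y0 where "Y0 = concat3 m (\<lambda>i. w2 i + \<tau> * (w1 i - ?e i)) w3 (\<lambda>i. w1 i - ?e i)"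
  define Y1 where "Y1 = concat3 m (\<lambda>i. 0 + \<tau> * ?e i) (\<lambda>_. 0) ?e"
  have Y: "Y0 \<in> N2 m A B C" "Y1 \<in> N2 m A B C"
    unfolding Y0_def Y1_def by (intro N2I zero_in_Delta; fact)+
  have sum: "c = (\<lambda>j. \<Sum>y\<leftarrow>[Y0, Y1]. y j)"
    by (simp add: c_eq Y0_def Y1_def concat3_def fun_eq_iff algebra_simps)
  have nm0: "Y0 \<noteq> (\<lambda>j. \<mu> * c j)" for \<mu>
  proof
    assume "Y0 = (\<lambda>j. \<mu> * c j)"
    then have "\<forall>i\<in>{1..m}. w1 i - ?e i = \<mu> * w1 i"
      unfolding Y0_def c_eq concat3_eq_smult_iff by blast
    then have "w1 k0 - ?e k0 = \<mu> * w1 k0" "w1 k - ?e k = \<mu> * w1 k"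
      using k(1) k0(1) by blast+
    then have "w1 k0 = \<mu> * w1 k0" "w1 k - 1 = \<mu> * w1 k"
      using k(3) by (auto simp: unit_vec_def)
    then show False using k0(3) by simp
  qed
  have nm1: "Y1 \<noteq> (\<lambda>j. \<mu> * c j)" for \<mu>
  proof
    assume "Y1 = (\<lambda>j. \<mu> * c j)"
    then have "\<forall>i\<in>{1..m}. ?e i = \<mu> * w1 i"
      unfolding Y1_def c_eq concat3_eq_smult_iff by blast
    then have "?e k0 = \<mu> * w1 k0" "?e k = \<mu> * w1 k"
      using k(1) k0(1) by blast+
    then have "0 = \<mu> * w1 k0" "1 = \<mu> * w1 k"
      using k(3) by (auto simp: unit_vec_def)
    then show False using k0(3) by simp
  qed
  show "\<exists>Ys. length Ys \<le> 2 \<and> is_nonproportional_sum (N2 m A B C) c Ys"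
    unfolding is_nonproportional_sum_def using Y sum nm0 nm1 by (intro exI[of _ "[Y0, Y1]"]) simp
qed

text \<open>Over \<open>\<bbbF>\<^sub>2\<close> a column is the sum of three columns with the same third block \<open>w\<^sub>1\<close>:
  the first blocks \<open>w\<^sub>2 + (1 - \<tau>) w\<^sub>1\<close>, \<open>b + w\<^sub>1\<close> and \<open>b\<close> add up to \<open>w\<^sub>2 + \<tau> w\<^sub>1\<close>
  in characteristic 2.\<close>

lemma locality_le_3_if_binary:
  assumes q: "CARD('a) = 2"
  shows "locality_le Nbar 3"
proof (rule locality_le_if_nonproportional_sums[OF projective_rep])
  fix c assume "c \<in> Nbar"
  then obtain w1 w2 w3 \<tau> k0 where w: "w1 \<in> Deltac m A" "w2 \<in> Delta m B" "w3 \<in> Delta m C" "\<tau> = 0 \<or> \<tau> = 1"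
    and c_eq: "c = concat3 m (\<lambda>i. w2 i + \<tau> * w1 i) w3 w1" and k0: "k0 \<in> {1..m}" "k0 \<notin> A" "w1 k0 \<noteq> 0"
    by (elim Nbar_memE)
  obtain b where b: "b \<in> Delta m B" "b \<noteq> w2"
    using B_nonempty B_subset_atLeastAtMost by (rule Delta_avoid)
  have k0_B: "w2 k0 = 0" "b k0 = 0"
    using w(2) b(1) k0(2) B_subset by (auto intro: Delta_vanishing)
  have b_eq: "b = w2" if "\<forall>i\<in>{1..m}. b i = w2 i"
    using that b(1) w(2) by (intro Fvec_eqI) (auto simp: Delta_def)
  have add_self: "z + z = 0" for z :: 'a
    by (rule binary_field_add_self[OF q])
  have "1 - \<tau> = 0 \<or> 1 - \<tau> = 1" using w(4) by auto
  define Y0 where "Y0 = concat3 m (\<lambda>i. w2 i + (1 - \<tau>) * w1 i) w3 w1"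
  define Y1 where "Y1 = concat3 m (\<lambda>i. b i + 1 * w1 i) (\<lambda>_. 0) w1"
  define Y2 where "Y2 = concat3 m (\<lambda>i. b i + 0 * w1 i) (\<lambda>_. 0) w1"
  have Y: "Y0 \<in> N2 m A B C" "Y1 \<in> N2 m A B C" "Y2 \<in> N2 m A B C"
    unfolding Y0_def Y1_def Y2_def
    by (intro N2I zero_in_Delta; use w b \<open>1 - \<tau> = 0 \<or> 1 - \<tau> = 1\<close> in simp)+
  have "w2 i + (1 - \<tau>) * w1 i + (b i + 1 * w1 i + (b i + 0 * w1 i + 0)) = w2 i + \<tau> * w1 i" for i
  proof -
    have "w2 i + (1 - \<tau>) * w1 i + (b i + 1 * w1 i + (b i + 0 * w1 i + 0)) =
        w2 i + \<tau> * w1 i + (w1 i + w1 i) + (b i + b i) - (\<tau> * w1 i + \<tau> * w1 i)"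
      by (simp add: algebra_simps)
    then show ?thesis by (simp only: add_self) simp
  qed
  then have sum: "c = (\<lambda>j. \<Sum>y\<leftarrow>[Y0, Y1, Y2]. y j)"
    by (simp add: c_eq Y0_def Y1_def Y2_def concat3_def fun_eq_iff add_self)
  have first_blocks: "\<forall>i\<in>{1..m}. u i = w2 i + \<tau> * w1 i"
    if "concat3 m u v w1 = (\<lambda>j. \<mu> * c j)" for u v \<mu>
    using concat3_eq_smult_same_third[OF that[unfolded c_eq] k0(1,3)] by blast
  have nm0: "Y0 \<noteq> (\<lambda>j. \<mu> * c j)" for \<mu>
  proof
    assume "Y0 = (\<lambda>j. \<mu> * c j)"
    then have "\<forall>i\<in>{1..m}. w2 i + (1 - \<tau>) * w1 i = w2 i + \<tau> * w1 i"
      using first_blocks unfolding Y0_def by blast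
    then have "(1 - \<tau>) * w1 k0 = \<tau> * w1 k0" using k0(1) by auto
    then have "1 - \<tau> = \<tau>" using k0(3) by simp
    then have "1 = \<tau> + \<tau>" by (simp add: diff_eq_eq)
    then show False using add_self by simp
  qed
  have nm1: "Y1 \<noteq> (\<lambda>j. \<mu> * c j)" for \<mu>
  proof
    assume "Y1 = (\<lambda>j. \<mu> * c j)"
    then have eq: "\<forall>i\<in>{1..m}. b i + w1 i = w2 i + \<tau> * w1 i"
      using first_blocks unfolding Y1_def by fastforce
    then have "\<tau> = 1" using k0 k0_B w(4) by force
    with eq b(2) b_eq show False by simp
  qed
  have nm2: "Y2 \<noteq> (\<lambda>j. \<mu> * c j)" for \<mu>
  proof
    assume "Y2 = (\<lambda>j. \<mu> * c j)"
    then have eq: "\<forall>i\<in>{1..m}. b i = w2 i + \<tau> * w1 i"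
      using first_blocks unfolding Y2_def by fastforce
    then have "\<tau> = 0" using k0 k0_B w(4) by force
    with eq b(2) b_eq show False by simp
  qed
  show "\<exists>Ys. length Ys \<le> 3 \<and> is_nonproportional_sum (N2 m A B C) c Ys"
    unfolding is_nonproportional_sum_def using Y sum nm0 nm1 nm2 by (intro exI[of _ "[Y0, Y1, Y2]"]) simp
qed

text \<open>If \<open>{1..m} - A = {k}\<close>, every column has a nonzero, hence over \<open>\<bbbF>\<^sub>2\<close> unit, entry at the
  coordinate \<open>k + 2m\<close>.\<close>

lemma not_locality_le_2_if_binary:
  assumes q: "CARD('a) = 2" and one_outside: "card ({1..m} - A) = 1"
  shows "\<not> locality_le Nbar 2"
proof -
  obtain k where k: "{1..m} - A = {k}" using one_outside by (rule card_1_singletonE)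
  have "c (k + 2*m) = 1" if "c \<in> Nbar" for c
  proof -
    obtain w1 w2 w3 \<tau> k0 where c: "c = concat3 m (\<lambda>i. w2 i + \<tau> * w1 i) w3 w1"
      and k0: "k0 \<in> {1..m}" "k0 \<notin> A" "w1 k0 \<noteq> 0"
      using \<open>c \<in> Nbar\<close> by (elim Nbar_memE)
    have "k0 = k" using k k0 by blast
    then have "c (k + 2*m) = w1 k0" using k0(1) by (simp add: c concat3_def)
    then show ?thesis using k0(3) binary_field_cases[OF q] by metis
  qed
  then show ?thesis
    using binary_not_locality_le_2[OF q Nbar_nonempty] by blast
qed

lemma has_locality_2:
  assumes "3 \<le> CARD('a) \<or> 2 \<le> card ({1..m} - A)"
  shows "has_locality Nbar 2"
  unfolding has_locality_def
proof (intro conjI allI impI)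
  show "locality_le Nbar 2"
    using assms locality_le_2_if_card_ge_3 locality_le_2_if_two_outside by blast
  fix r :: nat assume "0 < r \<and> r < 2"
  then have "r = 1" by simp
  then show "\<not> locality_le Nbar r" using not_locality_le_1_Nbar by simp
qed simp

lemma has_locality_3:
  assumes "CARD('a) = 2" "card ({1..m} - A) = 1"
  shows "has_locality Nbar 3"
  unfolding has_locality_def
proof (intro conjI allI impI)
  show "locality_le Nbar 3"
    using assms(1) by (rule locality_le_3_if_binary)
  fix r :: nat assume "0 < r \<and> r < 3"
  then have "r = 1 \<or> r = 2" by auto
  then show "\<not> locality_le Nbar r"
    using not_locality_le_1_Nbar not_locality_le_2_if_binary[OF assms] by auto
qed simp

lemma is_LRC_locality_2:
  assumes "3 \<le> CARD('a) \<or> 2 \<le> card ({1..m} - A)"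
  shows "is_LRC m Nbar (card Nbar) (2*m + card C)
    ((CARD('a) ^ m - (if B = A then 0 else 1) * CARD('a) ^ card A) * CARD('a) ^ (card B + card C - 1)) 2"
  unfolding is_LRC_def using finite_Nbar code_dim min_dist_code has_locality_2[OF assms] by simp

lemma is_LRC_locality_3:
  assumes "CARD('a) = 2" "card ({1..m} - A) = 1"
  shows "is_LRC m Nbar (2 ^ (m + card B + card C)) (2*m + card C)
    ((2 - (if B = A then 0 else 1)) * 2 ^ (m + card B + card C - 2)) 3"
  unfolding is_LRC_def
  using finite_Nbar binary_card_Nbar[OF assms] code_dim binary_min_dist[OF assms] has_locality_3[OF assms]
  by simp

end

theorem mainTheorem18:
  fixes m :: nat and A B C :: "nat set" and Nbar :: "(nat \<Rightarrow> 'a::{finite,field}) set"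
    and q :: nat and \<rho> :: nat
  assumes q_def: "q = card (UNIV :: 'a set)"
    and m2: "2 \<le> m"
    and A: "A \<noteq> {}" "A \<subset> {1..m}"
    and B: "B \<noteq> {}" "B \<subseteq> A"
    and C: "C \<noteq> {}" "C \<subseteq> {1..m}"
    and rho: "\<rho> = (if B = A then 0 else 1)"
    and Nbar: "is_projective_rep (N2 m A B C) Nbar"
  shows "((q \<ge> 3 \<or> (q = 2 \<and> card ({1..m} - A) \<ge> 2)) \<longrightarrow>
           (real (card Nbar) = 2 * real q ^ (card B + card C) * (real q ^ m - real q ^ card A) / (real q - 1)
            \<and> is_LRC m Nbar (card Nbar) (2*m + card C)
                 ((q ^ m - \<rho> * q ^ card A) * q ^ (card B + card C - 1)) 2))
       \<and> ((q = 2 \<and> card ({1..m} - A) = 1) \<longrightarrow>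
           is_LRC m Nbar (2 ^ (m + card B + card C)) (2*m + card C)
                 ((2 - \<rho>) * 2 ^ (m + card B + card C - 2)) 3)"
proof -
  interpret N2_code m A B C Nbar
    using A(2) B C(2) Nbar by unfold_locales
  show ?thesis
    unfolding q_def rho
    by (intro conjI impI; use card_Nbar_real is_LRC_locality_2 is_LRC_locality_3 in blast)
qed

end
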